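(* Let $u,w\in\mathbb{D}$ and $B(z)=\left(\frac{z-w}{1-\overline{w}z}\right)\left(\frac{z-u}{1-\overline{u}z}\right)$, let $c$ be the unique critical point of $B$ in $\mathbb{D}$, and let \[ \lambda=\exp\!\left[i\left(\pi+2\arg(1-\overline{c}w)+2\arg(1-\overline{c}u)+2\arg(1-c\overline{B(c)})\right)\right]\left(\frac{B(c)-c}{1-\overline{c}B(c)}\right). \] Then $B$ is elliptic, parabolic or hyperbolic respectively if and only if $\lambda$ lies in $\mathcal{E}_2$, in the relative boundary of $\mathcal{E}_2$ in $\mathbb{D}$, or in $\mathbb{D}\setminus\overline{\mathcal{E}_2}$, respectively.
   Context: $\mathbb{D}$ denotes the open unit disk. By the Denjoy–Wolff theorem, a finite Blaschke product $B$ of degree at least $2$ has a unique point $z_0\in\overline{\mathbb{D}}$ (its Denjoy–Wolff point) such that $B^n(z)\to z_0$ for every $z\in\mathbb{D}$. $B$ is called elliptic if $z_0\in\mathbb{D}$; hyperbolic if $z_0\in\partial\mathbb{D}$ and $B'(z_0)<1$; parabolic if $z_0\in\partial\mathbb{D}$ and $B'(z_0)=1$. $\mathcal{E}_2$ is the set of $w\in\mathbb{D}$ for which $\left(\frac{z-w}{1-\overline{w}z}\right)^2$ is elliptic. The quantities $\exp(2i\arg(\cdot))$ do not depend on the choice of branch of $\arg$. *)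

theory Defs
  imports "HOL-Analysis.Analysis"
begin

definition blaschke_factor :: "complex \<Rightarrow> complex \<Rightarrow> complex" where
  "blaschke_factor w z = (z - w) / (1 - cnj w * z)"

definition DW_point :: "(complex \<Rightarrow> complex) \<Rightarrow> complex \<Rightarrow> bool" where
  "DW_point B z0 \<longleftrightarrow> z0 \<in> cball 0 1 \<and>
     (\<forall>z\<in>ball 0 1. (\<lambda>n. (B ^^ n) z) \<longlonglongrightarrow> z0)"

definition elliptic :: "(complex \<Rightarrow> complex) \<Rightarrow> bool" where
  "elliptic B \<longleftrightarrow> (\<exists>z0. DW_point B z0 \<and> z0 \<in> ball 0 1)"

definition hyperbolic :: "(complex \<Rightarrow> complex) \<Rightarrow> bool" where
  "hyperbolic B \<longleftrightarrow> (\<exists>z0. DW_point B z0 \<and> norm z0 = 1 \<and>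
      deriv B z0 \<in> \<real> \<and> Re (deriv B z0) < 1)"

definition parabolic :: "(complex \<Rightarrow> complex) \<Rightarrow> bool" where
  "parabolic B \<longleftrightarrow> (\<exists>z0. DW_point B z0 \<and> norm z0 = 1 \<and> deriv B z0 = 1)"

definition E2 :: "complex set" where
  "E2 = {w \<in> ball 0 1. elliptic (\<lambda>z. (blaschke_factor w z)^2)}"

end

theory Submission
  imports Defs "HOL-Complex_Analysis.Complex_Analysis"
begin

text \<open>Write \<open>\<phi>\<^sub>a\<close> for \<open>blaschke_factor a\<close>. Since the critical point \<open>c\<close> is a double root of
  \<open>B - B(c)\<close>, one has \<open>\<phi>\<^bsub>B(c)\<^esub> \<circ> B = \<omega> \<phi>\<^sub>c\<^sup>2\<close> with \<open>\<bar>\<omega>\<bar> = 1\<close>, and a suitable rotation \<open>\<kappa>\<close> turns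
  this into \<open>B = \<phi>\<^sub>-\<^sub>c \<circ> (cnj \<kappa> \<cdot> q\<^sub>\<lambda>) \<circ> (\<kappa> \<cdot> \<phi>\<^sub>c)\<close>, where \<open>q\<^sub>\<lambda>(z) = \<phi>\<^sub>\<lambda>(z\<^sup>2)\<close> is the
  \<open>normal_form\<close> and \<open>\<lambda>\<close> is the parameter of the statement. Denjoy--Wolff points and their
  multipliers are transported by conjugation with disk automorphisms, so \<open>B\<close> has the type of \<open>q\<^sub>\<lambda>\<close>.

  The maps \<open>q\<^sub>\<mu>\<close> are classified by the sign of \<open>D(\<mu>) = 1 + 8 Re \<mu> + 18\<bar>\<mu>\<bar>\<^sup>2 - 27\<bar>\<mu>\<bar>\<^sup>4\<close>. If
  \<open>D(\<mu>) > 0\<close>, the fixed-point cubic has a root in the disk, which attracts every orbit by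
  Schwarz's lemma. If \<open>D(\<mu>) \<le> 0\<close>, a boundary point \<open>\<zeta>\<close> is found at which \<open>q\<^sub>\<mu>\<close> contracts
  horocycles, so that \<open>\<zeta>\<close> is the Denjoy--Wolff point; its multiplier is \<open>1\<close> exactly when \<open>D(\<mu>) = 0\<close>.
  Finally \<open>\<phi>\<^sub>\<mu>\<^sup>2\<close> is itself conjugate to \<open>q\<^sub>\<mu>\<close>, so \<open>E\<^sub>2 = {\<mu> \<in> \<bbbD>. D(\<mu>) > 0}\<close>, whose closure
  within \<open>\<bbbD>\<close> is \<open>{D \<ge> 0}\<close>.\<close>

section \<open>Blaschke factors\<close>

lemma blaschke_denom_nonzero: "norm a < 1 \<Longrightarrow> norm z \<le> 1 \<Longrightarrow> 1 - cnj a * z \<noteq> 0"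
proof -
  assume a: "norm a < 1" and z: "norm z \<le> 1"
  have "norm a * norm z \<le> norm a * 1" using z by (intro mult_left_mono) auto
  then have "norm (cnj a * z) < 1" using a by (simp add: norm_mult)
  then show ?thesis by auto
qed

lemma one_minus_norm_blaschke_factor_sq:
  assumes "norm a < 1" "norm z \<le> 1"
  shows "1 - (norm (blaschke_factor a z))^2
           = (1 - (norm a)^2) * (1 - (norm z)^2) / (norm (1 - cnj a * z))^2"
proof -
  have nz: "norm (1 - cnj a * z) \<noteq> 0" using blaschke_denom_nonzero[OF assms] by simp
  have id: "(norm (1 - cnj a * z))^2 - (norm (z - a))^2 = (1 - (norm a)^2) * (1 - (norm z)^2)"
    by (simp only: cmod_power2) (simp add: power2_eq_square algebra_simps)
  have "(norm (blaschke_factor a z))^2 = (norm (z - a))^2 / (norm (1 - cnj a * z))^2"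
    by (simp add: blaschke_factor_def norm_divide power_divide)
  then show ?thesis using nz id by (simp add: field_simps)
qed

lemma norm_blaschke_factor_less_1: "norm a < 1 \<Longrightarrow> norm z < 1 \<Longrightarrow> norm (blaschke_factor a z) < 1"
proof -
  assume a: "norm a < 1" and z: "norm z < 1"
  have "1 - (norm (blaschke_factor a z))^2 > 0"
    using one_minus_norm_blaschke_factor_sq[OF a] z a blaschke_denom_nonzero[OF a, of z]
    by (auto intro!: divide_pos_pos mult_pos_pos simp: power_less_one_iff abs_square_less_1)
  then show ?thesis by (simp add: abs_square_less_1)
qed

lemma norm_blaschke_factor_le_1: "norm a < 1 \<Longrightarrow> norm z \<le> 1 \<Longrightarrow> norm (blaschke_factor a z) \<le> 1"
proof -
  assume a: "norm a < 1" and z: "norm z \<le> 1"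
  have "1 - (norm (blaschke_factor a z))^2 \<ge> 0"
    using one_minus_norm_blaschke_factor_sq[OF a z] z a
    by (auto intro!: divide_nonneg_nonneg mult_nonneg_nonneg simp: power_le_one abs_square_le_1)
  then show ?thesis by (simp add: abs_square_le_1)
qed

lemma norm_blaschke_factor_eq_1: "norm a < 1 \<Longrightarrow> norm z = 1 \<Longrightarrow> norm (blaschke_factor a z) = 1"
  using one_minus_norm_blaschke_factor_sq[of a z] norm_ge_zero[of "blaschke_factor a z"]
  by (simp add: power2_eq_1_iff)

lemma blaschke_factor_inverse:
  assumes a: "norm a < 1" and d: "1 - cnj a * z \<noteq> 0"
  shows "blaschke_factor (-a) (blaschke_factor a z) = z"
proof -
  have aa: "1 - cnj a * a \<noteq> 0" using blaschke_denom_nonzero[OF a, of a] a by simp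
  have "blaschke_factor (-a) (blaschke_factor a z)
      = ((z - a)/(1 - cnj a*z) + a) / (1 - cnj (-a)*((z-a)/(1-cnj a*z)))"
    by (simp add: blaschke_factor_def)
  also have "\<dots> = (z * (1 - cnj a * a) / (1 - cnj a * z)) / ((1 - cnj a * a) / (1 - cnj a * z))"
    using d by (simp add: field_simps)
  also have "\<dots> = z" using d aa by simp
  finally show ?thesis .
qed

lemma blaschke_factor_field_differentiable:
  "1 - cnj a * z \<noteq> 0 \<Longrightarrow> blaschke_factor a field_differentiable at z"
  unfolding blaschke_factor_def field_differentiable_def
  by (rule exI) (auto intro!: derivative_eq_intros)

lemma isCont_blaschke_factor: "1 - cnj a * z \<noteq> 0 \<Longrightarrow> isCont (blaschke_factor a) z"
  using blaschke_factor_field_differentiable field_differentiable_imp_continuous_at by blast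

section \<open>Denjoy--Wolff points\<close>

lemma DW_point_unique: "DW_point f a \<Longrightarrow> DW_point f b \<Longrightarrow> a = b"
  unfolding DW_point_def using LIMSEQ_unique[of "\<lambda>n. (f ^^ n) 0"] by simp

lemma elliptic_not_parabolic: "elliptic f \<Longrightarrow> \<not> parabolic f"
  unfolding elliptic_def parabolic_def by (metis DW_point_unique mem_ball_0 less_irrefl)

lemma elliptic_not_hyperbolic: "elliptic f \<Longrightarrow> \<not> hyperbolic f"
  unfolding elliptic_def hyperbolic_def by (metis DW_point_unique mem_ball_0 less_irrefl)

lemma parabolic_not_hyperbolic: "parabolic f \<Longrightarrow> \<not> hyperbolic f"
  unfolding parabolic_def hyperbolic_def by (metis DW_point_unique one_complex.sel(1) less_irrefl)

lemma DW_point_fixed: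
  assumes "DW_point f z0" "isCont f z0"
  shows "f z0 = z0"
proof -
  have L: "(\<lambda>n. (f ^^ n) 0) \<longlonglongrightarrow> z0" using assms(1) unfolding DW_point_def by auto
  have "(\<lambda>n. f ((f ^^ n) 0)) \<longlonglongrightarrow> f z0" by (rule isCont_tendsto_compose[OF assms(2) L])
  moreover have "(\<lambda>n. f ((f ^^ n) 0)) \<longlonglongrightarrow> z0"
    using LIMSEQ_Suc[OF L] by simp
  ultimately show ?thesis by (rule LIMSEQ_unique)
qed

lemma DW_point_conj:
  fixes H A Ai G :: "complex \<Rightarrow> complex"
  assumes H: "\<And>z. norm z < 1 \<Longrightarrow> norm (H z) < 1"
    and A: "\<And>z. norm z < 1 \<Longrightarrow> norm (A z) < 1"
    and Ai: "\<And>y. norm y < 1 \<Longrightarrow> norm (Ai y) < 1"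
    and A_Ai: "\<And>y. norm y < 1 \<Longrightarrow> A (Ai y) = y"
    and Ai_A: "\<And>y. norm y < 1 \<Longrightarrow> Ai (A y) = y"
    and G: "\<And>z. norm z < 1 \<Longrightarrow> G z = Ai (H (A z))"
    and DW: "DW_point H z0" and Ai_cont: "isCont Ai z0" and Ai_z0: "norm (Ai z0) \<le> 1"
  shows "DW_point G (Ai z0)"
proof -
  have iter: "(G ^^ n) z = Ai ((H ^^ n) (A z)) \<and> norm ((H ^^ n) (A z)) < 1" if z: "norm z < 1" for z n
  proof (induction n)
    case 0 then show ?case using z A Ai_A by simp
  next
    case (Suc n)
    then have "(G ^^ Suc n) z = Ai (H (A (Ai ((H ^^ n) (A z)))))" using G Ai by simp
    then show ?case using Suc A_Ai H by simp
  qed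
  have "(\<lambda>n. (G ^^ n) z) \<longlonglongrightarrow> Ai z0" if z: "norm z < 1" for z
  proof -
    have "(\<lambda>n. (H ^^ n) (A z)) \<longlonglongrightarrow> z0" using DW A z unfolding DW_point_def by auto
    then have "(\<lambda>n. Ai ((H ^^ n) (A z))) \<longlonglongrightarrow> Ai z0" by (rule isCont_tendsto_compose[OF Ai_cont])
    then show ?thesis using iter[OF z] by simp
  qed
  then show ?thesis unfolding DW_point_def using Ai_z0 by simp
qed

lemma deriv_conj_fixed_point:
  fixes H A Ai G :: "complex \<Rightarrow> complex"
  assumes H: "H field_differentiable at z0" and fixed: "H z0 = z0"
    and A: "A field_differentiable at (Ai z0)" and Ai: "Ai field_differentiable at z0"
    and A_Ai: "A (Ai z0) = z0"
    and G: "\<forall>\<^sub>F y in nhds (Ai z0). G y = Ai (H (A y))"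
    and Ai_A: "\<forall>\<^sub>F y in nhds (Ai z0). Ai (A y) = y"
  shows "deriv G (Ai z0) = deriv H z0"
proof -
  obtain dA where dA: "(A has_field_derivative dA) (at (Ai z0))"
    using A field_differentiable_def by blast
  obtain dAi where dAi: "(Ai has_field_derivative dAi) (at z0)"
    using Ai field_differentiable_def by blast
  obtain dH where dH: "(H has_field_derivative dH) (at z0)"
    using H field_differentiable_def by blast
  have dAi': "(Ai has_field_derivative dAi) (at (A (Ai z0)))" using dAi A_Ai by simp
  have dH': "(H has_field_derivative dH) (at (A (Ai z0)))" using dH A_Ai by simp
  have dAi'': "(Ai has_field_derivative dAi) (at (H (A (Ai z0))))" using dAi A_Ai fixed by simp
  have "((\<lambda>y. Ai (A y)) has_field_derivative dAi * dA) (at (Ai z0))"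
    using DERIV_chain2[OF dAi' dA] .
  then have "((\<lambda>y. y) has_field_derivative dAi * dA) (at (Ai z0))"
    using DERIV_cong_ev[OF refl Ai_A refl] by blast
  then have chain_rule_inverse: "dAi * dA = 1" using DERIV_unique DERIV_ident by blast
  have "((\<lambda>y. Ai (H (A y))) has_field_derivative dAi * (dH * dA)) (at (Ai z0))"
    using DERIV_chain2[OF dAi'' DERIV_chain2[OF dH' dA]] .
  then have "(G has_field_derivative dAi * (dH * dA)) (at (Ai z0))"
    using DERIV_cong_ev[OF refl G refl] by blast
  then show ?thesis
    using DERIV_imp_deriv[OF dH] chain_rule_inverse by (simp add: DERIV_imp_deriv algebra_simps)
qed

section \<open>Two convergence criteria for iterates\<close>

lemma iterates_tendsto_0_if_shrinking:
  fixes g :: "complex \<Rightarrow> complex"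
  assumes g_ball: "\<And>y. norm y < 1 \<Longrightarrow> norm (g y) < 1" and g_cont: "continuous_on (ball 0 1) g"
    and g0: "g 0 = 0" and g_shrink: "\<And>y. norm y < 1 \<Longrightarrow> y \<noteq> 0 \<Longrightarrow> norm (g y) < norm y"
    and y: "norm y < 1"
  shows "(\<lambda>n. (g ^^ n) y) \<longlonglongrightarrow> 0"
proof -
  define x where "x n = (g ^^ n) y" for n
  have x_Suc: "x (Suc n) = g (x n)" for n unfolding x_def by simp
  have x_ball: "norm (x n) < 1" for n by (induction n) (auto simp: x_def y g_ball)
  have "norm (x (Suc n)) \<le> norm (x n)" for n
    using g_shrink[OF x_ball[of n]] g0 by (cases "x n = 0") (auto simp: x_Suc less_imp_le)
  then have "decseq (\<lambda>n. norm (x n))" by (simp add: decseq_Suc_iff)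
  then obtain A where A: "(\<lambda>n. norm (x n)) \<longlonglongrightarrow> A" "\<And>n. A \<le> norm (x n)"
    using decseq_convergent[of _ 0] norm_ge_zero by blast
  have x_le_y: "norm (x n) \<le> norm y" for n
    using decseqD[OF \<open>decseq _\<close>, of 0 n] by (simp add: x_def)
  have "A = 0"
  proof (rule ccontr)
    assume "A \<noteq> 0"
    moreover have "0 \<le> A" using LIMSEQ_le_const[OF A(1)] by simp
    ultimately have A_pos: "A > 0" by simp
    define C :: "complex set" where "C = cball 0 (norm y) - ball 0 A"
    have x_C: "x n \<in> C" for n using x_le_y[of n] A(2)[of n] unfolding C_def by auto
    have C_nonzero: "w \<noteq> 0" if "w \<in> C" for w using that A_pos unfolding C_def by auto
    have C_ball: "norm w < 1" if "w \<in> C" for w using that y unfolding C_def by auto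
    have "C \<subseteq> ball 0 1" using C_ball by auto
    then have "continuous_on C (\<lambda>w. norm (g w) / norm w)"
      using C_nonzero continuous_on_subset[OF g_cont] by (intro continuous_intros) auto
    moreover have "compact C" unfolding C_def by (intro compact_diff) auto
    moreover have "C \<noteq> {}" using x_C by blast
    ultimately obtain w0 where w0: "w0 \<in> C" "\<And>w. w \<in> C \<Longrightarrow> norm (g w) / norm w \<le> norm (g w0) / norm w0"
      using continuous_attains_sup[of C] by blast
    define c where "c = norm (g w0) / norm w0"
    have c: "c < 1" using g_shrink C_ball[OF w0(1)] C_nonzero[OF w0(1)] unfolding c_def by simp
    have "norm (x (Suc n)) \<le> c * norm (x n)" for n
      using w0(2)[OF x_C[of n]] C_nonzero[OF x_C[of n]] unfolding c_def x_Suc by (simp add: field_simps)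
    then have "A \<le> c * A"
      using LIMSEQ_le[OF LIMSEQ_Suc[OF A(1)] tendsto_mult_left[OF A(1), of c]] by blast
    with c A_pos show False by (simp add: mult_le_cancel_right1)
  qed
  then show ?thesis using A(1) tendsto_norm_zero_iff unfolding x_def by blast
qed

lemma horocycle_factor_bounds:
  fixes r :: real
  assumes "0 \<le> r" "r \<le> 1"
  shows "(1 + r)^2 / (2 * (1 + r^2)) \<le> 1"
    "(1 - r)^2 / 4 \<le> 1 - (1 + r)^2 / (2 * (1 + r^2))"
proof -
  have p: "2 * (1 + r^2) > 0" by (simp add: add_pos_nonneg)
  have eq: "1 - (1 + r)^2 / (2 * (1 + r^2)) = (1 - r)^2 / (2 * (1 + r^2))"
    using p by (simp add: field_simps power2_eq_square)
  have "(1 + r)^2 \<le> 2 * (1 + r^2)"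
    using zero_le_power2[of "1 - r"] by (simp add: power2_eq_square algebra_simps)
  then show "(1 + r)^2 / (2 * (1 + r^2)) \<le> 1" using p by simp
  have "2 * (1 + r^2) \<le> 4" using power_le_one[OF assms] by simp
  then show "(1 - r)^2 / 4 \<le> 1 - (1 + r)^2 / (2 * (1 + r^2))"
    unfolding eq using p by (intro divide_left_mono) auto
qed

text \<open>Applied to the horocycle function \<open>h = \<bar>\<zeta> - z\<bar>\<^sup>2 / (1 - \<bar>z\<bar>\<^sup>2)\<close> along an orbit: \<open>h\<close> decreases to
  a limit, which is either \<open>0\<close>, or positive, in which case the contraction factors tend to \<open>1\<close>
  and force \<open>r = \<bar>z\<bar>\<close> to \<open>1\<close>.\<close>
lemma horocycle_contraction_tendsto_0:
  fixes h r :: "nat \<Rightarrow> real"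
  assumes r: "\<And>n. 0 \<le> r n" "\<And>n. r n < 1" and h_nonneg: "\<And>n. 0 \<le> h n"
    and h_step: "\<And>n. h (Suc n) \<le> h n * ((1 + r n)^2 / (2 * (1 + (r n)^2)))"
  shows "(\<lambda>n. h n * (1 - (r n)^2)) \<longlonglongrightarrow> 0"
proof -
  define k where "k n = (1 + r n)^2 / (2 * (1 + (r n)^2))" for n
  have k: "k n \<le> 1" "(1 - r n)^2 / 4 \<le> 1 - k n" for n
    unfolding k_def using horocycle_factor_bounds[of "r n"] r[of n] by auto
  have r_sq: "0 \<le> 1 - (r n)^2" "1 - (r n)^2 \<le> 1" for n
    using r[of n] by (simp_all add: abs_square_le_1)
  have "h (Suc n) \<le> h n" for n
    using h_step[of n] mult_left_le[OF k(1) h_nonneg, of n n] unfolding k_def by linarith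
  then have "decseq h" by (simp add: decseq_Suc_iff)
  then obtain H where H: "h \<longlonglongrightarrow> H" "\<And>n. H \<le> h n"
    using decseq_convergent[of h 0] h_nonneg by blast
  show ?thesis
  proof (cases "H = 0")
    case True
    have "h n * (1 - (r n)^2) \<le> h n" for n using h_nonneg[of n] r_sq[of n] by (simp add: mult_left_le)
    then have le: "\<forall>\<^sub>F n in sequentially. h n * (1 - (r n)^2) \<le> h n" by simp
    have "h \<longlonglongrightarrow> 0" using H(1) True by simp
    from tendsto_sandwich[OF _ le tendsto_const this] show ?thesis using h_nonneg r_sq by simp
  next
    case False
    have "0 \<le> H" using LIMSEQ_le_const[OF H(1)] h_nonneg by blast
    then have H_pos: "H > 0" using False by simp
    define t where "t n = 1 - h (Suc n) / h n" for n
    have "(\<lambda>n. h (Suc n) / h n) \<longlonglongrightarrow> H / H"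
      by (rule tendsto_divide[OF LIMSEQ_Suc[OF H(1)] H(1) False])
    then have "(\<lambda>n. 1 - h (Suc n) / h n) \<longlonglongrightarrow> 1 - H / H" by (rule tendsto_diff[OF tendsto_const])
    then have "t \<longlonglongrightarrow> 0" using False by (simp add: t_def[abs_def])
    then have t: "(\<lambda>n. 4 * h 0 * sqrt (t n)) \<longlonglongrightarrow> 0"
      using tendsto_mult_left[OF tendsto_real_sqrt, of t 0 sequentially "4 * h 0"] by simp
    have bound: "h n * (1 - (r n)^2) \<le> 4 * h 0 * sqrt (t n)" for n
    proof -
      have "h (Suc n) / h n \<le> k n" using h_step[of n] H_pos H(2)[of n] by (simp add: k_def field_simps)
      then have "(1 - r n)^2 \<le> 4 * t n" using k(2)[of n] unfolding t_def by simp
      then have "sqrt ((1 - r n)^2) \<le> sqrt (4 * t n)" by (rule real_sqrt_le_mono)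
      then have "1 - r n \<le> 2 * sqrt (t n)" using r[of n] by (simp add: real_sqrt_mult)
      moreover have "1 - (r n)^2 \<le> 2 * (1 - r n)"
        using zero_le_power2[of "r n - 1"] by (simp add: power2_eq_square algebra_simps)
      ultimately have "1 - (r n)^2 \<le> 4 * sqrt (t n)" by argo
      moreover have "h n \<le> h 0" using decseqD[OF \<open>decseq h\<close>, of 0 n] by simp
      ultimately have "h n * (1 - (r n)^2) \<le> h 0 * (4 * sqrt (t n))"
        using h_nonneg[of n] r_sq[of n] by (intro mult_mono) auto
      then show ?thesis by simp
    qed
    then have "\<forall>\<^sub>F n in sequentially. h n * (1 - (r n)^2) \<le> 4 * h 0 * sqrt (t n)" by simp
    from tendsto_sandwich[OF _ this tendsto_const t] show ?thesis using h_nonneg r_sq by simp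
  qed
qed

lemma iterates_tendsto_if_horocycle_contraction:
  fixes f :: "complex \<Rightarrow> complex" and \<zeta> z :: complex
  assumes f_ball: "\<And>z. norm z < 1 \<Longrightarrow> norm (f z) < 1"
    and contract: "\<And>z. norm z < 1 \<Longrightarrow> (norm (\<zeta> - f z))^2 / (1 - (norm (f z))^2)
          \<le> (norm (\<zeta> - z))^2 / (1 - (norm z)^2) * ((1 + norm z)^2 / (2 * (1 + (norm z)^2)))"
    and z: "norm z < 1"
  shows "(\<lambda>n. (f ^^ n) z) \<longlonglongrightarrow> \<zeta>"
proof -
  define x where "x n = (f ^^ n) z" for n
  have x_ball: "norm (x n) < 1" for n unfolding x_def by (induction n) (auto simp: z f_ball)
  have x_pos: "1 - (norm (x n))^2 > 0" for n using x_ball[of n] by (simp add: abs_square_less_1)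
  define h where "h n = (norm (\<zeta> - x n))^2 / (1 - (norm (x n))^2)" for n
  have h_nonneg: "0 \<le> h n" for n unfolding h_def using x_pos[of n] by simp
  have "(\<lambda>n. h n * (1 - (norm (x n))^2)) \<longlonglongrightarrow> 0"
  proof (rule horocycle_contraction_tendsto_0)
    show "h (Suc n) \<le> h n * ((1 + norm (x n))^2 / (2 * (1 + (norm (x n))^2)))" for n
      using contract[OF x_ball[of n]] unfolding h_def x_def by simp
  qed (use x_ball h_nonneg in auto)
  moreover have "h n * (1 - (norm (x n))^2) = (norm (x n - \<zeta>))^2" for n
    using x_pos[of n] by (simp add: h_def norm_minus_commute)
  ultimately have "(\<lambda>n. (norm (x n - \<zeta>))^2) \<longlonglongrightarrow> 0" by simp
  then have "(\<lambda>n. sqrt ((norm (x n - \<zeta>))^2)) \<longlonglongrightarrow> sqrt 0" by (rule tendsto_real_sqrt)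
  then have "(\<lambda>n. norm (x n - \<zeta>)) \<longlonglongrightarrow> 0" by simp
  then have "(\<lambda>n. x n - \<zeta>) \<longlonglongrightarrow> 0" by (rule tendsto_norm_zero_cancel)
  then show ?thesis unfolding x_def by (rule LIM_zero_cancel)
qed

section \<open>The normal form \<open>z \<mapsto> \<phi>\<^sub>\<mu>(z\<^sup>2)\<close>\<close>

definition normal_form :: "complex \<Rightarrow> complex \<Rightarrow> complex" where
  "normal_form \<mu> z = blaschke_factor \<mu> (z^2)"

text \<open>Up to a positive factor, \<open>nf_discr \<mu>\<close> is the discriminant of the cubic
  \<open>cnj \<mu> z\<^sup>3 + z\<^sup>2 - z - \<mu>\<close>, whose roots are the fixed points of \<open>normal_form \<mu>\<close>.\<close>
definition nf_discr :: "complex \<Rightarrow> real" where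
  "nf_discr \<mu> = 1 + 8 * Re \<mu> + 18 * (norm \<mu>)^2 - 27 * (norm \<mu>)^4"

lemma normal_form_denom_nonzero: "norm \<mu> < 1 \<Longrightarrow> norm z \<le> 1 \<Longrightarrow> 1 - cnj \<mu> * z^2 \<noteq> 0"
  by (rule blaschke_denom_nonzero) (auto simp: norm_power power_le_one)

lemma norm_normal_form_less_1: "norm \<mu> < 1 \<Longrightarrow> norm z < 1 \<Longrightarrow> norm (normal_form \<mu> z) < 1"
  unfolding normal_form_def
  by (rule norm_blaschke_factor_less_1) (auto simp: norm_power power_less_one_iff abs_square_less_1)

lemma has_field_derivative_normal_form:
  assumes "1 - cnj \<mu> * z^2 \<noteq> 0"
  shows "(normal_form \<mu> has_field_derivative 2 * z * (1 - cnj \<mu> * \<mu>) / (1 - cnj \<mu> * z^2)^2) (at z)"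
proof -
  have "((\<lambda>z. (z^2 - \<mu>) / (1 - cnj \<mu> * z^2)) has_field_derivative
     ((2*z) * (1 - cnj \<mu> * z^2) - (z^2 - \<mu>) * (-(cnj \<mu>*(2*z)))) / ((1 - cnj \<mu> * z^2) * (1 - cnj \<mu> * z^2))) (at z)"
    using assms by (auto intro!: derivative_eq_intros)
  moreover have "((2*z) * (1 - cnj \<mu> * z^2) - (z^2 - \<mu>) * (-(cnj \<mu>*(2*z))))
                    / ((1 - cnj \<mu> * z^2) * (1 - cnj \<mu> * z^2))
      = 2 * z * (1 - cnj \<mu> * \<mu>) / (1 - cnj \<mu> * z^2)^2"
    by (simp add: power2_eq_square algebra_simps)
  ultimately show ?thesis unfolding normal_form_def blaschke_factor_def by simp
qed

lemma normal_form_field_differentiable: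
  "norm \<mu> < 1 \<Longrightarrow> norm z \<le> 1 \<Longrightarrow> normal_form \<mu> field_differentiable at z"
  using has_field_derivative_normal_form normal_form_denom_nonzero field_differentiable_def by blast

lemma Schwarz_strict_if_not_injective:
  fixes g :: "complex \<Rightarrow> complex"
  assumes hol: "g holomorphic_on ball 0 1" and g0: "g 0 = 0"
    and g_ball: "\<And>z. norm z < 1 \<Longrightarrow> norm (g z) < 1"
    and w: "norm w1 < 1" "norm w2 < 1" "w1 \<noteq> w2" "g w1 = g w2"
    and y: "norm y < 1" "y \<noteq> 0"
  shows "norm (g y) < norm y"
proof -
  have "norm (g y) \<noteq> norm y"
  proof
    assume "norm (g y) = norm y"
    then obtain \<alpha> where \<alpha>: "\<And>z. norm z < 1 \<Longrightarrow> g z = \<alpha> * z" "norm \<alpha> = 1"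
      using Schwarz_Lemma(3)[OF hol g0 g_ball y(1)] y by blast
    then have "\<alpha> * w1 = \<alpha> * w2" using w by metis
    with \<alpha>(2) w(3) show False by auto
  qed
  with Schwarz_Lemma(1)[OF hol g0 g_ball y(1)] show ?thesis by simp
qed

text \<open>In coordinates centred at the fixed point, \<open>normal_form \<mu>\<close> becomes a two-to-one
  self-map of the disk fixing \<open>0\<close>, hence a strict contraction by Schwarz's lemma.\<close>
lemma DW_point_normal_form_interior:
  assumes mu: "norm \<mu> < 1" and p: "norm p < 1" and fixed: "normal_form \<mu> p = p"
  shows "DW_point (normal_form \<mu>) p"
proof -
  have mp: "norm (-p) < 1" using p by simp
  define g where "g y = blaschke_factor p (normal_form \<mu> (blaschke_factor (-p) y))" for y
  have inv: "blaschke_factor (-p) (blaschke_factor p w) = w" if "norm w \<le> 1" for w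
    by (rule blaschke_factor_inverse[OF p blaschke_denom_nonzero[OF p that]])
  have inv': "blaschke_factor p (blaschke_factor (-p) w) = w" if "norm w \<le> 1" for w
    using blaschke_factor_inverse[OF mp blaschke_denom_nonzero[OF mp that]] by simp
  have ball_p: "norm (blaschke_factor (-p) y) < 1" if "norm y < 1" for y
    using norm_blaschke_factor_less_1[OF mp that] .
  have g_ball: "norm (g y) < 1" if "norm y < 1" for y
    unfolding g_def using norm_blaschke_factor_less_1[OF p norm_normal_form_less_1[OF mu ball_p[OF that]]] .
  have "g field_differentiable at y" if y: "norm y < 1" for y
  proof -
    have "blaschke_factor (-p) field_differentiable at y"
      by (rule blaschke_factor_field_differentiable, rule blaschke_denom_nonzero[OF mp]) (use y in simp)
    moreover have "normal_form \<mu> field_differentiable at (blaschke_factor (-p) y)"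
      using normal_form_field_differentiable[OF mu] ball_p[OF y] by simp
    moreover have "blaschke_factor p field_differentiable at (normal_form \<mu> (blaschke_factor (-p) y))"
      by (rule blaschke_factor_field_differentiable, rule blaschke_denom_nonzero[OF p])
        (use norm_normal_form_less_1[OF mu ball_p[OF y]] in simp)
    ultimately show ?thesis
      unfolding g_def using field_differentiable_compose[unfolded o_def] by blast
  qed
  then have hol: "g holomorphic_on ball 0 1"
    by (simp add: field_differentiable_at_within holomorphic_on_def)
  have g0: "g 0 = 0"
    using fixed by (simp add: g_def blaschke_factor_def)
  have two_to_one: "g (blaschke_factor p (1/2)) = g (blaschke_factor p (-1/2))"
    unfolding g_def by (simp add: inv normal_form_def)
  have w_ball: "norm (blaschke_factor p (1/2)) < 1" "norm (blaschke_factor p (-1/2)) < 1"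
    by (rule norm_blaschke_factor_less_1[OF p], simp)+
  have "blaschke_factor p (1/2) \<noteq> blaschke_factor p (-1/2)"
    using inv[of "1/2"] inv[of "-1/2"] by force
  note shrink = Schwarz_strict_if_not_injective[OF hol g0 g_ball w_ball this two_to_one]
  have "(\<lambda>n. (g ^^ n) y) \<longlonglongrightarrow> 0" if "norm y < 1" for y
    by (rule iterates_tendsto_0_if_shrinking[OF g_ball holomorphic_on_imp_continuous_on[OF hol] g0
          shrink that])
  then have DW: "DW_point g 0" unfolding DW_point_def by simp
  have conj: "normal_form \<mu> z = blaschke_factor (-p) (g (blaschke_factor p z))" if "norm z < 1" for z
    unfolding g_def using that inv norm_blaschke_factor_less_1[OF p that]
      norm_normal_form_less_1[OF mu that] by simp
  have "DW_point (normal_form \<mu>) (blaschke_factor (-p) 0)"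
  proof (rule DW_point_conj[of g "blaschke_factor p" "blaschke_factor (-p)"])
    show "isCont (blaschke_factor (-p)) 0" by (rule isCont_blaschke_factor) simp
  qed (use g_ball norm_blaschke_factor_less_1[OF p] ball_p inv inv' conj DW in \<open>auto simp: less_imp_le\<close>)
  then show ?thesis by (simp add: blaschke_factor_def)
qed

lemma normal_form_fixed_if_cubic_root:
  assumes mu: "norm \<mu> < 1" and z: "norm z < 1" and root: "cnj \<mu> * z^3 + z^2 - z - \<mu> = 0"
  shows "normal_form \<mu> z = z"
proof -
  have "1 - cnj \<mu> * z^2 \<noteq> 0" using normal_form_denom_nonzero[OF mu] z by simp
  moreover have "z^2 - \<mu> = z * (1 - cnj \<mu> * z^2)"
    using root by (simp add: algebra_simps power2_eq_square power3_eq_cube)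
  ultimately show ?thesis unfolding normal_form_def blaschke_factor_def by simp
qed

lemma cubic_root_reflect:
  assumes z: "z \<noteq> 0" and root: "cnj \<mu> * z^3 + z^2 - z - \<mu> = 0"
  shows "cnj \<mu> * (1 / cnj z)^3 + (1 / cnj z)^2 - (1 / cnj z) - \<mu> = 0"
proof -
  have "\<mu> * cnj z^3 + cnj z^2 - cnj z - cnj \<mu> = 0" using arg_cong[where f=cnj, OF root] by simp
  moreover have "cnj \<mu> * (1 / cnj z)^3 + (1 / cnj z)^2 - (1 / cnj z) - \<mu>
      = - (\<mu> * cnj z^3 + cnj z^2 - cnj z - cnj \<mu>) / cnj z ^ 3"
    using z by (simp add: field_simps power3_eq_cube power2_eq_square)
  ultimately show ?thesis by simp
qed

lemma cubic_roots_exist: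
  fixes m \<mu> :: complex
  assumes m: "m \<noteq> 0"
  obtains z1 z2 z3 where "m * (z1 + z2 + z3) = -1" "m * (z1*z2 + z1*z3 + z2*z3) = -1" "m * (z1*z2*z3) = \<mu>"
proof -
  define a where "a i = (if i = 0 then -\<mu> else if i = 1 then -1 else if i = 2 then 1 else m)" for i :: nat
  have "a 0 = 0 \<or> (\<exists>i\<in>{1..3}. a i \<noteq> 0)"
    by (rule disjI2, rule bexI[of _ 2]) (auto simp: a_def)
  then obtain z1 where "(\<Sum>i\<le>3. a i * z1^i) = 0"
    using fundamental_theorem_of_algebra by blast
  then have q1: "m * z1^3 + z1^2 - z1 - \<mu> = 0"
    unfolding a_def by (simp add: numeral_3_eq_3 eval_nat_numeral algebra_simps)
  define \<beta> where "\<beta> = 1 + m * z1"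
  define \<gamma> where "\<gamma> = z1 + m * z1^2 - 1"
  define b where "b i = (if i = 0 then \<gamma> else if i = 1 then \<beta> else m)" for i :: nat
  have "b 0 = 0 \<or> (\<exists>i\<in>{1..2}. b i \<noteq> 0)"
    by (rule disjI2, rule bexI[of _ 2]) (auto simp: b_def m)
  then obtain z2 where "(\<Sum>i\<le>2. b i * z2^i) = 0"
    using fundamental_theorem_of_algebra by blast
  then have q2: "m * z2^2 + \<beta> * z2 + \<gamma> = 0"
    unfolding b_def by (simp add: eval_nat_numeral algebra_simps)
  define z3 where "z3 = -(\<beta> + m * z2) / m"
  have r3: "m * z3 = -(\<beta> + m * z2)" unfolding z3_def using m by simp
  show ?thesis
  proof
    show "m * (z1 + z2 + z3) = -1" using r3 unfolding \<beta>_def by algebra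
    show "m * (z1*z2 + z1*z3 + z2*z3) = -1" using r3 q2 unfolding \<beta>_def \<gamma>_def by algebra
    show "m * (z1*z2*z3) = \<mu>" using r3 q2 q1 unfolding \<beta>_def \<gamma>_def by algebra
  qed
qed

lemma nf_discr_nonpos_if_roots_unimodular:
  fixes \<mu> z1 z2 z3 :: complex
  assumes vieta: "cnj \<mu> * (z1 + z2 + z3) = -1" "cnj \<mu> * (z1*z2 + z1*z3 + z2*z3) = -1"
      "cnj \<mu> * (z1*z2*z3) = \<mu>"
    and unimodular: "norm z1 = 1" "norm z2 = 1" "norm z3 = 1"
  shows "nf_discr \<mu> \<le> 0"
proof -
  define m where "m = cnj \<mu>"
  have cnj_inv: "cnj z * z = 1" if "norm z = 1" for z
    using complex_norm_square[of z] that by (simp add: mult.commute)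
  have sq_diff: "(a - b)^2 = - (a * b) * ((a - b) * (cnj a - cnj b))"
    if "cnj a * a = 1" "cnj b * b = 1" for a b :: complex
    using that by algebra
  have norm_sq: "(a - b) * (cnj a - cnj b) = of_real ((norm (a - b))^2)" for a b :: complex
    using complex_norm_square[of "a - b"] by simp
  define q where "q = (norm (z1 - z2))^2 * (norm (z1 - z3))^2 * (norm (z2 - z3))^2"
  have "((z1-z2)*(z1-z3)*(z2-z3))^2 = (z1-z2)^2 * (z1-z3)^2 * (z2-z3)^2"
    by (simp add: power_mult_distrib)
  also have "\<dots> = - ((z1*z2*z3)^2) * (((z1 - z2) * (cnj z1 - cnj z2)) * ((z1 - z3) * (cnj z1 - cnj z3))
                      * ((z2 - z3) * (cnj z2 - cnj z3)))"
    unfolding sq_diff[OF cnj_inv cnj_inv, OF unimodular(1,2)] sq_diff[OF cnj_inv cnj_inv, OF unimodular(1,3)]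
      sq_diff[OF cnj_inv cnj_inv, OF unimodular(2,3)]
    by (simp add: power2_eq_square algebra_simps)
  also have "\<dots> = - ((z1*z2*z3)^2) * of_real q" unfolding norm_sq q_def by simp
  finally have discr_roots: "((z1-z2)*(z1-z3)*(z2-z3))^2 = - ((z1*z2*z3)^2) * of_real q" .
  have mu_m: "\<mu> * m = of_real ((norm \<mu>)^2)" unfolding m_def using complex_norm_square[of \<mu>] by simp
  have "1 + 4*\<mu> + 4*m + 18*\<mu>*m - 27*(\<mu>*m)^2 = m^4 * ((z1-z2)*(z1-z3)*(z2-z3))^2"
    using vieta unfolding m_def by algebra
  also have "\<dots> = - ((m * (z1*z2*z3))^2) * m^2 * of_real q"
    unfolding discr_roots by (simp add: power2_eq_square power4_eq_xxxx algebra_simps)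
  also have "\<dots> = - ((\<mu> * m)^2) * of_real q"
    using vieta(3)[folded m_def] by (simp add: power2_eq_square algebra_simps)
  also have "\<dots> = of_real (- ((norm \<mu>)^4 * q))"
    unfolding mu_m by (simp add: power2_eq_square power4_eq_xxxx)
  finally have discr_cubic: "1 + 4*\<mu> + 4*m + 18*\<mu>*m - 27*(\<mu>*m)^2 = of_real (- ((norm \<mu>)^4 * q))" .
  have re: "4*\<mu> + 4*m = of_real (8 * Re \<mu>)"
    using complex_add_cnj[of \<mu>] unfolding m_def by (simp add: distrib_left[symmetric])
  have "1 + 4*\<mu> + 4*m + 18*\<mu>*m - 27*(\<mu>*m)^2 = 1 + (4*\<mu> + 4*m) + 18*(\<mu>*m) - 27*(\<mu>*m)^2"
    by (simp add: algebra_simps)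
  also have "\<dots> = of_real (nf_discr \<mu>)"
    unfolding re mu_m nf_discr_def by (simp add: power2_eq_square power4_eq_xxxx)
  finally have "1 + 4*\<mu> + 4*m + 18*\<mu>*m - 27*(\<mu>*m)^2 = of_real (nf_discr \<mu>)" .
  then have "of_real (nf_discr \<mu>) = (of_real (- ((norm \<mu>)^4 * q)) :: complex)"
    using discr_cubic by simp
  then have "nf_discr \<mu> = - ((norm \<mu>)^4 * q)" using of_real_eq_iff by blast
  then show ?thesis unfolding q_def by simp
qed

text \<open>The root set of the cubic is invariant under \<open>z \<mapsto> 1 / cnj z\<close>, so if no root lies in the
  open disk, all three roots lie on the unit circle.\<close>
lemma normal_form_interior_fixed_point:
  assumes mu: "norm \<mu> < 1" and discr: "nf_discr \<mu> > 0"
  shows "\<exists>p. norm p < 1 \<and> normal_form \<mu> p = p"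
proof (rule ccontr)
  assume no_fixed: "\<not> ?thesis"
  have "\<mu> \<noteq> 0"
  proof
    assume "\<mu> = 0"
    then have "normal_form \<mu> 0 = 0" by (simp add: normal_form_def blaschke_factor_def)
    with no_fixed show False by auto
  qed
  then obtain z1 z2 z3 where vieta: "cnj \<mu> * (z1 + z2 + z3) = -1"
      "cnj \<mu> * (z1*z2 + z1*z3 + z2*z3) = -1" "cnj \<mu> * (z1*z2*z3) = \<mu>"
    using cubic_roots_exist[of "cnj \<mu>" \<mu>] by auto
  have "cnj \<mu> * z^3 + z^2 - z - \<mu> = cnj \<mu> * ((z - z1) * (z - z2) * (z - z3))" for z
    using vieta by algebra
  then have root: "cnj \<mu> * z^3 + z^2 - z - \<mu> = 0" if "z \<in> {z1, z2, z3}" for z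
    using that by auto
  have "norm z = 1" if z: "z \<in> {z1, z2, z3}" for z
  proof (rule ccontr)
    assume "norm z \<noteq> 1"
    then consider "norm z < 1" | "norm z > 1" by linarith
    then show False
    proof cases
      case 1
      then show False using no_fixed normal_form_fixed_if_cubic_root[OF mu 1 root[OF z]] by blast
    next
      case 2
      then have "norm (1 / cnj z) < 1" by (simp add: norm_divide divide_less_eq)
      moreover have "z \<noteq> 0" using 2 by auto
      ultimately show False
        using no_fixed normal_form_fixed_if_cubic_root[OF mu _ cubic_root_reflect[OF _ root[OF z]]] by blast
    qed
  qed
  then have "nf_discr \<mu> \<le> 0" using nf_discr_nonpos_if_roots_unimodular[OF vieta] by simp
  with discr show False by simp
qed

text \<open>Every \<open>\<mu>\<close> with \<open>nf_discr \<mu> \<le> 0\<close> is \<open>nf_param v\<close> for some \<open>v\<close> with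
  \<open>4 Re v + 1 + 3\<bar>v\<bar>\<^sup>2 \<le> 0\<close>; the Denjoy--Wolff point of \<open>normal_form \<mu>\<close> is then \<open>unit_ratio v\<close>.\<close>
definition unit_ratio :: "complex \<Rightarrow> complex" where
  "unit_ratio v = (1 + v) / (1 + cnj v)"

definition nf_param :: "complex \<Rightarrow> complex" where
  "nf_param v = unit_ratio v * v"

lemma one_plus_nonzero: "norm (v::complex) < 1 \<Longrightarrow> 1 + v \<noteq> 0"
  by (auto simp: add_eq_0_iff)

lemma norm_one_plus_cnj: "norm (1 + cnj v) = norm (1 + v)"
  using complex_mod_cnj[of "1 + v"] by simp

lemma norm_unit_ratio: "norm v < 1 \<Longrightarrow> norm (unit_ratio v) = 1"
  using one_plus_nonzero norm_one_plus_cnj by (simp add: unit_ratio_def norm_divide)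

lemma norm_nf_param: "norm v < 1 \<Longrightarrow> norm (nf_param v) = norm v"
  using norm_unit_ratio by (simp add: nf_param_def norm_mult)

lemma nf_param_cnj: "nf_param (cnj v) = cnj (nf_param v)"
  by (simp add: nf_param_def unit_ratio_def)

lemma norm_one_plus_sq: "(norm (1 + v))^2 = 1 + 2 * Re v + (norm v)^2"
  by (simp only: cmod_power2) (simp add: power2_eq_square algebra_simps)

lemma nf_discr_nf_param:
  fixes v :: complex
  assumes v: "norm v < 1"
  defines "t \<equiv> 4 * Re v + 1 + 3 * (norm v)^2"
  shows "nf_discr (nf_param v) * (norm (1 + v))^2 = t^2 * (t - 9 * (norm v)^2 + 1) / 2"
proof -
  define N where "N = (norm (1 + v))^2"
  have "of_real N = (1 + v) * (1 + cnj v)"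
    using complex_norm_square[of "1 + v"] by (simp add: N_def)
  then have "nf_param v * of_real N = v * (1 + v)^2"
    unfolding nf_param_def unit_ratio_def
    using one_plus_nonzero[of "cnj v"] v by (simp add: field_simps power2_eq_square)
  from arg_cong[where f=Re, OF this]
  have "Re (nf_param v) * (norm (1 + v))^2 = Re (v * (1 + v)^2)" by (simp add: N_def)
  moreover have sq: "(norm (1 + v))^2 = (1 + Re v)^2 + (Im v)^2" "(norm v)^2 = (Re v)^2 + (Im v)^2"
    by (simp_all add: cmod_power2)
  ultimately have re: "Re (nf_param v) * ((1 + Re v)^2 + (Im v)^2)
      = Re v + 2 * ((Re v)^2 - (Im v)^2) + (Re v)^3 - 3 * Re v * (Im v)^2"
    by (simp add: power2_eq_square power3_eq_cube algebra_simps)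
  have "nf_discr (nf_param v) * (norm (1 + v))^2
      = (1 + 18 * (norm v)^2 - 27 * ((norm v)^2)^2) * (norm (1 + v))^2
        + 8 * (Re (nf_param v) * (norm (1 + v))^2)"
    unfolding nf_discr_def norm_nf_param[OF v] by (simp add: algebra_simps)
  also have "\<dots> = t^2 * (t - 9 * (norm v)^2 + 1) / 2"
    unfolding t_def sq re by (simp add: power2_eq_square power3_eq_cube field_simps)
  finally show ?thesis .
qed

lemma unit_ratio_minus_normal_form:
  assumes v: "norm v < 1" and denom: "1 - cnj (nf_param v) * z^2 \<noteq> 0"
  shows "unit_ratio v - normal_form (nf_param v) z
      = (1 + cnj v) * (unit_ratio v - z) * (unit_ratio v + z) / (1 - cnj (nf_param v) * z^2)"
proof -
  define \<zeta> where "\<zeta> = unit_ratio v"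
  have unimodular: "\<zeta> * cnj \<zeta> = 1"
    using norm_unit_ratio[OF v] complex_norm_square[of \<zeta>] by (simp add: \<zeta>_def)
  have ratio: "\<zeta> * (1 + cnj v) = 1 + v"
    using one_plus_nonzero[of "cnj v"] v by (simp add: \<zeta>_def unit_ratio_def)
  have "\<zeta> * (1 - cnj \<zeta> * cnj v * z^2) - (z^2 - \<zeta> * v) = (1 + cnj v) * (\<zeta> - z) * (\<zeta> + z)"
    using unimodular ratio by algebra
  then show ?thesis
    using denom unfolding \<zeta>_def[symmetric] nf_param_def normal_form_def blaschke_factor_def
    by (simp add: field_simps)
qed

text \<open>The factor \<open>(1 + \<bar>z\<bar>)\<^sup>2 / (2 (1 + \<bar>z\<bar>\<^sup>2))\<close> arises from \<open>\<bar>\<zeta> + z\<bar>\<^sup>2 \<le> (1 + \<bar>z\<bar>)\<^sup>2\<close> and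
  \<open>1 - \<bar>z\<bar>\<^sup>4 = (1 - \<bar>z\<bar>\<^sup>2)(1 + \<bar>z\<bar>\<^sup>2)\<close>; the hypothesis on \<open>v\<close> says \<open>2\<bar>1 + v\<bar>\<^sup>2 \<le> 1 - \<bar>v\<bar>\<^sup>2\<close>.\<close>
lemma normal_form_horocycle_contraction:
  assumes v: "norm v < 1" and t: "4 * Re v + 1 + 3 * (norm v)^2 \<le> 0" and z: "norm z < 1"
  defines "\<zeta> \<equiv> unit_ratio v" and "f \<equiv> normal_form (nf_param v)"
  shows "(norm (\<zeta> - f z))^2 / (1 - (norm (f z))^2)
          \<le> (norm (\<zeta> - z))^2 / (1 - (norm z)^2) * ((1 + norm z)^2 / (2 * (1 + (norm z)^2)))"
proof -
  define \<mu> where "\<mu> = nf_param v"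
  have mu: "norm \<mu> < 1" and nmu: "norm \<mu> = norm v" using norm_nf_param[OF v] v by (simp_all add: \<mu>_def)
  have z2: "norm (z^2) \<le> 1" using z by (simp add: norm_power power_le_one)
  define D where "D = (norm (1 - cnj \<mu> * z^2))^2"
  have D: "D > 0" unfolding D_def using normal_form_denom_nonzero[OF mu] z by simp
  define s where "s = (norm (\<zeta> - z))^2"
  define p where "p = (norm (\<zeta> + z))^2"
  define A where "A = (norm (1 + v))^2"
  define V where "V = 1 - (norm v)^2"
  define Z where "Z = 1 - (norm z)^2"
  define W where "W = 1 + (norm z)^2"
  have Z: "Z > 0" unfolding Z_def using z by (simp add: abs_square_less_1)
  have W: "W > 0" unfolding W_def by (simp add: add_pos_nonneg)
  have V: "V > 0" unfolding V_def using v by (simp add: abs_square_less_1)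
  have denom: "1 - cnj (nf_param v) * z^2 \<noteq> 0"
    using normal_form_denom_nonzero[OF mu] z by (simp add: \<mu>_def)
  have num: "(norm (\<zeta> - f z))^2 = A * s * p / D"
    using unit_ratio_minus_normal_form[OF v denom] norm_one_plus_cnj[of v]
    unfolding f_def \<zeta>_def \<mu>_def A_def s_def p_def D_def
    by (simp add: norm_mult norm_divide power_mult_distrib power_divide)
  have "1 - (norm (z^2))^2 = Z * W"
    unfolding Z_def W_def norm_power by (simp add: power2_eq_square algebra_simps)
  then have den: "1 - (norm (f z))^2 = V * Z * W / D"
    using one_minus_norm_blaschke_factor_sq[OF mu z2] nmu
    unfolding f_def \<mu>_def[symmetric] normal_form_def D_def V_def by simp
  have AV: "A / V \<le> 1 / 2" using t norm_one_plus_sq[of v] V unfolding A_def V_def by (simp add: field_simps)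
  have "p \<le> (1 + norm z)^2"
    using norm_triangle_ineq[of \<zeta> z] norm_unit_ratio[OF v] unfolding p_def \<zeta>_def
    by (intro power_mono) auto
  have "(norm (\<zeta> - f z))^2 / (1 - (norm (f z))^2) = (A / V) * (s / Z) * (p / W)"
    unfolding num den using D V Z W by (simp add: field_simps)
  also have "\<dots> \<le> (1/2) * (s / Z) * (p / W)"
    using AV Z W by (intro mult_right_mono) (auto simp: s_def p_def)
  also have "\<dots> \<le> (1/2) * (s / Z) * ((1 + norm z)^2 / W)"
    using \<open>p \<le> _\<close> Z W by (intro mult_left_mono divide_right_mono) (auto simp: s_def)
  also have "\<dots> = (s / Z) * ((1 + norm z)^2 / (2 * W))" by simp
  finally show ?thesis unfolding s_def Z_def W_def .
qed

lemma deriv_normal_form_unit_ratio: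
  assumes v: "norm v < 1"
  shows "deriv (normal_form (nf_param v)) (unit_ratio v) = of_real (2 * (norm (1 + v))^2 / (1 - (norm v)^2))"
proof -
  define \<zeta> where "\<zeta> = unit_ratio v"
  define \<mu> where "\<mu> = nf_param v"
  have mu: "norm \<mu> < 1" using norm_nf_param[OF v] v by (simp add: \<mu>_def)
  have unimodular: "\<zeta> * cnj \<zeta> = 1"
    using norm_unit_ratio[OF v] complex_norm_square[of \<zeta>] by (simp add: \<zeta>_def)
  have ratio: "\<zeta> * (1 + cnj v) = 1 + v"
    using one_plus_nonzero[of "cnj v"] v by (simp add: \<zeta>_def unit_ratio_def)
  have denom: "1 - cnj \<mu> * \<zeta>^2 \<noteq> 0"
    using normal_form_denom_nonzero[OF mu] norm_unit_ratio[OF v] by (simp add: \<zeta>_def)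
  have vv: "1 - v * cnj v \<noteq> 0"
    using blaschke_denom_nonzero[OF v, of v] v by (simp add: mult.commute)
  have mu_eq: "\<mu> = \<zeta> * v" and cnj_mu: "cnj \<mu> = cnj \<zeta> * cnj v"
    by (simp_all add: \<mu>_def \<zeta>_def nf_param_def)
  have "(2*\<zeta>*(1 - cnj \<zeta> * cnj v * (\<zeta> * v))) * (1 - v * cnj v)
      = 2 * ((1 + v) * (1 + cnj v)) * (1 - cnj \<zeta> * cnj v * \<zeta>^2)^2"
    using unimodular ratio by algebra
  then have "2 * \<zeta> * (1 - cnj \<mu> * \<mu>) / (1 - cnj \<mu> * \<zeta>^2)^2 = 2 * ((1 + v) * (1 + cnj v)) / (1 - v * cnj v)"
    using vv denom[unfolded cnj_mu] unfolding cnj_mu mu_eq by (simp add: field_simps)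
  also have "\<dots> = of_real (2 * (norm (1 + v))^2 / (1 - (norm v)^2))"
  proof -
    have "(complex_of_real (norm (1 + v)))^2 = (1 + v) * (1 + cnj v)"
      using complex_norm_square[of "1 + v"] by simp
    moreover have "(complex_of_real (norm v))^2 = v * cnj v"
      using complex_norm_square[of v] by simp
    ultimately show ?thesis by simp
  qed
  finally have "deriv (normal_form \<mu>) \<zeta> = of_real (2 * (norm (1 + v))^2 / (1 - (norm v)^2))"
    using DERIV_imp_deriv[OF has_field_derivative_normal_form[OF denom]] by simp
  then show ?thesis by (simp add: \<zeta>_def \<mu>_def)
qed

lemma DW_point_normal_form_boundary:
  assumes v: "norm v < 1" and t: "4 * Re v + 1 + 3 * (norm v)^2 \<le> 0"
  shows "DW_point (normal_form (nf_param v)) (unit_ratio v)"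
proof -
  have mu: "norm (nf_param v) < 1" using norm_nf_param[OF v] v by simp
  have "(\<lambda>n. (normal_form (nf_param v) ^^ n) z) \<longlonglongrightarrow> unit_ratio v" if "norm z < 1" for z
    by (rule iterates_tendsto_if_horocycle_contraction[OF norm_normal_form_less_1[OF mu]
          normal_form_horocycle_contraction[OF v t] that])
  then show ?thesis unfolding DW_point_def using norm_unit_ratio[OF v] by simp
qed

lemma norm_ge_third_if_nf_discr_nonpos:
  assumes mu: "norm \<mu> < 1" and discr: "nf_discr \<mu> \<le> 0"
  shows "1/3 \<le> norm \<mu>"
proof (rule ccontr)
  define r where "r = norm \<mu>"
  assume "\<not> 1/3 \<le> norm \<mu>"
  then have "1 - 3*r > 0" unfolding r_def by simp
  then have "(1 - 3*r)^3 * (1 + r) > 0" unfolding r_def by (simp add: add_pos_nonneg)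
  moreover have "(1 - 3*r)^3 * (1 + r) = 1 - 8*r + 18*r^2 - 27*r^4"
    by (simp add: power2_eq_square power3_eq_cube power4_eq_xxxx algebra_simps)
  moreover have "- r \<le> Re \<mu>" unfolding r_def using abs_Re_le_cmod[of \<mu>] by linarith
  ultimately have "nf_discr \<mu> > 0" unfolding nf_discr_def r_def[symmetric] by linarith
  with discr show False by simp
qed

text \<open>On the arc \<open>\<bar>v\<bar> = r\<close>, \<open>Re v \<le> -(1 + 3r\<^sup>2)/4\<close> (where \<open>4 Re v + 1 + 3\<bar>v\<bar>\<^sup>2 \<le> 0\<close>), the real part of
  \<open>nf_param v\<close> runs continuously from \<open>-r\<close> to the value at which \<open>nf_discr\<close> vanishes.\<close>
lemma nf_param_Re_onto:
  fixes r x :: real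
  assumes r: "1/3 \<le> r" "r < 1" and x: "-r \<le> x" and discr: "1 + 8 * x + 18 * r^2 - 27 * r^4 \<le> 0"
  obtains v where "norm v = r" "4 * Re v + 1 + 3 * (norm v)^2 \<le> 0" "Re (nf_param v) = x"
proof -
  define a0 where "a0 = - (1 + 3 * r^2) / 4"
  have a0r: "-r \<le> a0"
  proof -
    have "(3*r - 1) * (r - 1) \<le> 0" using r by (intro mult_nonneg_nonpos) auto
    then show ?thesis unfolding a0_def by (simp add: algebra_simps power2_eq_square)
  qed
  have "0 < 1 + 3 * r^2" using zero_le_power2[of r] by linarith
  then have a0_neg: "a0 < 0" unfolding a0_def by simp
  define V where "V a = Complex a (sqrt (r^2 - a^2))" for a
  have V_eq: "V a = of_real a + \<i> * of_real (sqrt (r^2 - a^2))" for a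
    unfolding V_def by (simp add: complex_eq_iff)
  have norm_V: "norm (V a) = r" if "-r \<le> a" "a \<le> a0" for a
  proof -
    have "\<bar>a\<bar> \<le> r" using that a0_neg by auto
    then have "a^2 \<le> r^2" using abs_le_square_iff[of a r] r by simp
    then show ?thesis unfolding V_def using r by (simp add: complex_norm)
  qed
  define X where "X a = Re (nf_param (V a))" for a
  have "continuous_on {-r..a0} X"
  proof -
    have "1 + cnj (V a) \<noteq> 0" if "a \<in> {-r..a0}" for a
      using one_plus_nonzero[of "cnj (V a)"] norm_V[of a] that r by auto
    then show ?thesis unfolding X_def nf_param_def unit_ratio_def V_eq
      by (intro continuous_intros) (auto simp del: complex_cnj_add)
  qed
  moreover have "X (-r) = -r"
  proof -
    have "V (-r) = - of_real r" unfolding V_def by (simp add: complex_eq_iff)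
    moreover have "1 - of_real r \<noteq> (0::complex)" using r by (metis of_real_1 of_real_eq_iff less_irrefl right_minus_eq)
    ultimately show ?thesis unfolding X_def nf_param_def unit_ratio_def by simp
  qed
  moreover have "x \<le> X a0"
  proof -
    have v0: "norm (V a0) = r" "norm (V a0) < 1" using norm_V a0r r by auto
    have "4 * Re (V a0) + 1 + 3 * (norm (V a0))^2 = 0"
      unfolding v0(1) unfolding V_def a0_def by (simp add: field_simps)
    then have "nf_discr (nf_param (V a0)) * (norm (1 + V a0))^2 = 0"
      using nf_discr_nf_param[OF v0(2)] by simp
    then have "nf_discr (nf_param (V a0)) = 0" using one_plus_nonzero[OF v0(2)] by simp
    then have "1 + 8 * X a0 + 18 * r^2 - 27 * r^4 = 0"
      using norm_nf_param[OF v0(2)] v0(1) unfolding nf_discr_def X_def by simp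
    then show ?thesis using discr by linarith
  qed
  ultimately obtain a where a: "-r \<le> a" "a \<le> a0" "X a = x"
    using IVT'[of X "-r" x a0] x a0r by auto
  show ?thesis
  proof (rule that[of "V a"])
    show "norm (V a) = r" using norm_V a by simp
    then show "4 * Re (V a) + 1 + 3 * (norm (V a))^2 \<le> 0" using a(2) unfolding V_def a0_def by simp
    show "Re (nf_param (V a)) = x" using a(3) unfolding X_def .
  qed
qed

lemma nf_param_onto:
  assumes mu: "norm \<mu> < 1" and discr: "nf_discr \<mu> \<le> 0"
  obtains v where "norm v < 1" "4 * Re v + 1 + 3 * (norm v)^2 \<le> 0" "\<mu> = nf_param v"
proof -
  have "- norm \<mu> \<le> Re \<mu>" using abs_Re_le_cmod[of \<mu>] by linarith
  moreover have "1 + 8 * Re \<mu> + 18 * (norm \<mu>)^2 - 27 * (norm \<mu>)^4 \<le> 0"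
    using discr unfolding nf_discr_def .
  ultimately obtain v where v: "norm v = norm \<mu>" "4 * Re v + 1 + 3 * (norm v)^2 \<le> 0"
      "Re (nf_param v) = Re \<mu>"
    using nf_param_Re_onto norm_ge_third_if_nf_discr_nonpos[OF mu discr] mu by metis
  have v1: "norm v < 1" using v(1) mu by simp
  have "(norm (nf_param v))^2 = (norm \<mu>)^2" using norm_nf_param[OF v1] v(1) by simp
  then have "(Im (nf_param v))^2 = (Im \<mu>)^2" unfolding cmod_power2 v(3) by simp
  then consider "Im (nf_param v) = Im \<mu>" | "Im (nf_param v) = - Im \<mu>" using power2_eq_iff by blast
  then show ?thesis
  proof cases
    case 1
    then have "\<mu> = nf_param v" using v(3) by (simp add: complex_eq_iff)
    then show ?thesis using that[of v] v v1 by blast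
  next
    case 2
    then have "\<mu> = nf_param (cnj v)" using v(3) by (simp add: nf_param_cnj complex_eq_iff)
    then show ?thesis using that[of "cnj v"] v v1 by simp
  qed
qed

text \<open>The multiplier at \<open>unit_ratio v\<close> is \<open>1 + t / (1 - \<bar>v\<bar>\<^sup>2)\<close> with \<open>t = 4 Re v + 1 + 3\<bar>v\<bar>\<^sup>2 \<le> 0\<close>,
  while \<open>nf_discr\<close> has the sign of \<open>t\<^sup>2 (t - 9\<bar>v\<bar>\<^sup>2 + 1)\<close>; since \<open>\<bar>v\<bar> \<ge> 1/3\<close>, both vanish exactly when \<open>t = 0\<close>.\<close>
lemma normal_form_boundary_type:
  assumes mu: "norm \<mu> < 1" and discr: "nf_discr \<mu> \<le> 0"
  shows "nf_discr \<mu> = 0 \<Longrightarrow> parabolic (normal_form \<mu>)"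
    and "nf_discr \<mu> < 0 \<Longrightarrow> hyperbolic (normal_form \<mu>)"
proof -
  obtain v where v: "norm v < 1" and t_nonpos: "4 * Re v + 1 + 3 * (norm v)^2 \<le> 0"
    and mu_eq: "\<mu> = nf_param v"
    using nf_param_onto[OF mu discr] by blast
  define t where "t = 4 * Re v + 1 + 3 * (norm v)^2"
  define s where "s = (norm v)^2"
  have "1/3 \<le> norm v" using norm_ge_third_if_nf_discr_nonpos[OF mu discr] norm_nf_param[OF v]
    unfolding mu_eq by simp
  then have "(1/3)^2 \<le> s" unfolding s_def by (intro power_mono) auto
  moreover have "s < 1" unfolding s_def using v by (simp add: abs_square_less_1)
  ultimately have s: "1/9 \<le> s" "s < 1" by (simp_all add: power2_eq_square)
  have "2 * (norm (1 + v))^2 = (1 - s) + t" unfolding t_def s_def using norm_one_plus_sq[of v] by simp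
  then have "2 * (norm (1 + v))^2 / (1 - (norm v)^2) = 1 + t / (1 - s)"
    using s unfolding s_def by (simp add: field_simps)
  then have DW: "DW_point (normal_form \<mu>) (unit_ratio v)" "norm (unit_ratio v) = 1"
    and multiplier: "deriv (normal_form \<mu>) (unit_ratio v) = of_real (1 + t / (1 - s))"
    using DW_point_normal_form_boundary[OF v t_nonpos] norm_unit_ratio[OF v]
      deriv_normal_form_unit_ratio[OF v] unfolding mu_eq by simp_all
  have sign: "nf_discr \<mu> * (norm (1 + v))^2 = t^2 * (t - 9 * s + 1) / 2"
    using nf_discr_nf_param[OF v] unfolding mu_eq t_def s_def .
  have pos: "(norm (1 + v))^2 > 0" using one_plus_nonzero[OF v] by simp
  have t_neg_iff: "t < 0 \<longleftrightarrow> nf_discr \<mu> < 0"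
  proof
    assume "t < 0"
    then have "t^2 * (t - 9 * s + 1) / 2 < 0" using s by (simp add: mult_pos_neg)
    then have "nf_discr \<mu> * (norm (1 + v))^2 < 0" using sign by simp
    then show "nf_discr \<mu> < 0" using pos by (simp add: mult_less_0_iff)
  next
    assume "nf_discr \<mu> < 0"
    then have "t \<noteq> 0" using sign pos by auto
    then show "t < 0" using t_nonpos unfolding t_def by simp
  qed
  show "parabolic (normal_form \<mu>)" if "nf_discr \<mu> = 0"
  proof -
    have "t = 0" using t_neg_iff that t_nonpos unfolding t_def by simp
    then show ?thesis unfolding parabolic_def using DW multiplier by auto
  qed
  show "hyperbolic (normal_form \<mu>)" if "nf_discr \<mu> < 0"
  proof -
    have "t / (1 - s) < 0" using t_neg_iff that s by (simp add: divide_neg_pos)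
    then show ?thesis unfolding hyperbolic_def using DW multiplier by auto
  qed
qed

lemma iteration_type_by_sign:
  fixes f :: "complex \<Rightarrow> complex" and x :: real
  assumes "0 < x \<Longrightarrow> elliptic f" "x = 0 \<Longrightarrow> parabolic f" "x < 0 \<Longrightarrow> hyperbolic f"
  shows "(elliptic f \<longleftrightarrow> 0 < x) \<and> (parabolic f \<longleftrightarrow> x = 0) \<and> (hyperbolic f \<longleftrightarrow> x < 0)"
  using assms elliptic_not_parabolic elliptic_not_hyperbolic parabolic_not_hyperbolic
    linorder_less_linear[of 0 x] by blast

lemma normal_form_classification:
  assumes mu: "norm \<mu> < 1"
  shows "(elliptic (normal_form \<mu>) \<longleftrightarrow> 0 < nf_discr \<mu>)
       \<and> (parabolic (normal_form \<mu>) \<longleftrightarrow> nf_discr \<mu> = 0)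
       \<and> (hyperbolic (normal_form \<mu>) \<longleftrightarrow> nf_discr \<mu> < 0)"
proof (rule iteration_type_by_sign)
  assume "0 < nf_discr \<mu>"
  then obtain p where "norm p < 1" "normal_form \<mu> p = p"
    using normal_form_interior_fixed_point[OF mu] by blast
  then show "elliptic (normal_form \<mu>)"
    unfolding elliptic_def using DW_point_normal_form_interior[OF mu] by auto
qed (use normal_form_boundary_type[OF mu] in auto)

section \<open>Conjugation by disk automorphisms\<close>

lemma isCont_eventually_nonzero:
  fixes g :: "'a::t2_space \<Rightarrow> 'b::t2_space"
  assumes "isCont g z" "g z \<noteq> c"
  shows "\<forall>\<^sub>F y in nhds z. g y \<noteq> c"
  using tendsto_imp_eventually_ne[OF isCont_tendsto_compose[OF assms(1) filterlim_ident] assms(2)] .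

lemma rotated_blaschke_factor_inverse:
  assumes a: "norm a < 1" and \<kappa>: "norm \<kappa> = 1"
  shows "norm y \<le> 1 \<Longrightarrow> \<kappa> * blaschke_factor a (blaschke_factor (-a) (cnj \<kappa> * y)) = y"
    and "1 - cnj a * z \<noteq> 0 \<Longrightarrow> blaschke_factor (-a) (cnj \<kappa> * (\<kappa> * blaschke_factor a z)) = z"
proof -
  have kk: "cnj \<kappa> * \<kappa> = 1" using complex_norm_square[of \<kappa>] \<kappa> by (simp add: mult.commute)
  have ma: "norm (-a) < 1" using a by simp
  show "\<kappa> * blaschke_factor a (blaschke_factor (-a) (cnj \<kappa> * y)) = y" if "norm y \<le> 1"
  proof -
    have "1 - cnj (-a) * (cnj \<kappa> * y) \<noteq> 0"
      by (rule blaschke_denom_nonzero[OF ma]) (use \<kappa> that in \<open>simp add: norm_mult\<close>)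
    then have "blaschke_factor a (blaschke_factor (-a) (cnj \<kappa> * y)) = cnj \<kappa> * y"
      using blaschke_factor_inverse[OF ma] by fastforce
    then show ?thesis using kk by (simp add: mult.assoc[symmetric] mult.commute)
  qed
  show "blaschke_factor (-a) (cnj \<kappa> * (\<kappa> * blaschke_factor a z)) = z" if "1 - cnj a * z \<noteq> 0"
    using kk blaschke_factor_inverse[OF a that] by (simp add: mult.assoc[symmetric])
qed

lemma iteration_types_conj:
  fixes H G :: "complex \<Rightarrow> complex" and a \<kappa> :: complex
  assumes a: "norm a < 1" and \<kappa>: "norm \<kappa> = 1"
    and H_ball: "\<And>z. norm z < 1 \<Longrightarrow> norm (H z) < 1"
    and H_diff: "\<And>z. norm z = 1 \<Longrightarrow> H field_differentiable at z"
    and G: "\<And>z. norm z \<le> 1 \<Longrightarrow>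
              \<forall>\<^sub>F y in nhds z. G y = blaschke_factor (-a) (cnj \<kappa> * H (\<kappa> * blaschke_factor a y))"
  shows "(elliptic H \<longrightarrow> elliptic G) \<and> (parabolic H \<longrightarrow> parabolic G) \<and> (hyperbolic H \<longrightarrow> hyperbolic G)"
proof -
  define A where "A y = \<kappa> * blaschke_factor a y" for y
  define Ai where "Ai y = blaschke_factor (-a) (cnj \<kappa> * y)" for y
  have ma: "norm (-a) < 1" using a by simp
  have nk: "norm (cnj \<kappa> * y) = norm y" for y using \<kappa> by (simp add: norm_mult)
  have A_ball: "norm (A y) < 1" if "norm y < 1" for y
    using norm_blaschke_factor_less_1[OF a that] \<kappa> by (simp add: A_def norm_mult)
  have Ai_ball: "norm (Ai y) < 1" if "norm y < 1" for y
    unfolding Ai_def using norm_blaschke_factor_less_1[OF ma] nk that by simp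
  have Ai_sphere: "norm (Ai y) = 1" if "norm y = 1" for y
    unfolding Ai_def using norm_blaschke_factor_eq_1[OF ma] nk that by simp
  have A_Ai: "A (Ai y) = y" if "norm y \<le> 1" for y
    unfolding A_def Ai_def using rotated_blaschke_factor_inverse(1)[OF a \<kappa> that] .
  have Ai_A: "Ai (A y) = y" if "1 - cnj a * y \<noteq> 0" for y
    unfolding A_def Ai_def using rotated_blaschke_factor_inverse(2)[OF a \<kappa> that] .
  have Ai_A_near: "\<forall>\<^sub>F y in nhds z. Ai (A y) = y" if "norm z \<le> 1" for z
  proof -
    have "\<forall>\<^sub>F y in nhds z. 1 - cnj a * y \<noteq> 0"
      by (rule isCont_eventually_nonzero) (use blaschke_denom_nonzero[OF a that] in auto)
    then show ?thesis by (rule eventually_mono) (rule Ai_A)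
  qed
  have G': "\<forall>\<^sub>F y in nhds z. G y = Ai (H (A y))" if "norm z \<le> 1" for z
    using G[OF that] unfolding Ai_def A_def .
  have Ai_diff: "Ai field_differentiable at z" if "norm z \<le> 1" for z
  proof -
    have "blaschke_factor (-a) field_differentiable at (cnj \<kappa> * z)"
      by (rule blaschke_factor_field_differentiable, rule blaschke_denom_nonzero[OF ma]) (use nk that in simp)
    then show ?thesis unfolding Ai_def
      using field_differentiable_compose[of "\<lambda>y. cnj \<kappa> * y" z "blaschke_factor (-a)"]
      by (simp add: o_def field_differentiable_linear)
  qed
  have A_diff: "A field_differentiable at y" if "norm y \<le> 1" for y
  proof -
    have "blaschke_factor a field_differentiable at y"
      by (rule blaschke_factor_field_differentiable, rule blaschke_denom_nonzero[OF a that])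
    then show ?thesis unfolding A_def by (intro field_differentiable_mult field_differentiable_const)
  qed
  have DW: "DW_point G (Ai z0)" if "DW_point H z0" for z0
  proof (rule DW_point_conj[OF H_ball A_ball Ai_ball _ _ _ that])
    have z0: "norm z0 \<le> 1" using that unfolding DW_point_def by simp
    show "isCont Ai z0" using Ai_diff[OF z0] field_differentiable_imp_continuous_at by blast
    show "norm (Ai z0) \<le> 1" using Ai_ball[of z0] Ai_sphere[of z0] z0 by (cases "norm z0 = 1") auto
    show "A (Ai y) = y" if "norm y < 1" for y using A_Ai that by simp
    show "Ai (A y) = y" if "norm y < 1" for y using Ai_A blaschke_denom_nonzero[OF a] that by simp
    show "G z = Ai (H (A z))" if "norm z < 1" for z
      using eventually_nhds_x_imp_x[OF G'] that by simp
  qed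
  have multiplier: "deriv G (Ai z0) = deriv H z0" if "DW_point H z0" "norm z0 = 1" for z0
  proof (rule deriv_conj_fixed_point)
    show "H z0 = z0"
      using DW_point_fixed[OF that(1)] H_diff[OF that(2)] field_differentiable_imp_continuous_at by blast
    show "A (Ai z0) = z0" using A_Ai that(2) by simp
    show "\<forall>\<^sub>F y in nhds (Ai z0). G y = Ai (H (A y))" "\<forall>\<^sub>F y in nhds (Ai z0). Ai (A y) = y"
      using G' Ai_A_near Ai_sphere[OF that(2)] by simp_all
  qed (use that H_diff A_diff Ai_diff Ai_sphere in simp_all)
  show ?thesis
  proof (intro conjI impI)
    assume "elliptic H"
    then obtain z0 where "DW_point H z0" "norm z0 < 1" unfolding elliptic_def by auto
    then show "elliptic G" unfolding elliptic_def using DW Ai_ball by auto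
  next
    assume "parabolic H"
    then obtain z0 where "DW_point H z0" "norm z0 = 1" "deriv H z0 = 1" unfolding parabolic_def by auto
    then show "parabolic G" unfolding parabolic_def using DW multiplier Ai_sphere by metis
  next
    assume "hyperbolic H"
    then obtain z0 where "DW_point H z0" "norm z0 = 1" "deriv H z0 \<in> \<real>" "Re (deriv H z0) < 1"
      unfolding hyperbolic_def by auto
    then show "hyperbolic G" unfolding hyperbolic_def using DW multiplier Ai_sphere by metis
  qed
qed

lemma conj_normal_form_classification:
  fixes G :: "complex \<Rightarrow> complex" and a \<kappa> \<mu> :: complex
  assumes a: "norm a < 1" and \<kappa>: "norm \<kappa> = 1" and mu: "norm \<mu> < 1"
    and G: "\<And>z. norm z \<le> 1 \<Longrightarrow>
       \<forall>\<^sub>F y in nhds z. G y = blaschke_factor (-a) (cnj \<kappa> * normal_form \<mu> (\<kappa> * blaschke_factor a y))"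
  shows "(elliptic G \<longleftrightarrow> 0 < nf_discr \<mu>) \<and> (parabolic G \<longleftrightarrow> nf_discr \<mu> = 0)
       \<and> (hyperbolic G \<longleftrightarrow> nf_discr \<mu> < 0)"
proof -
  have "normal_form \<mu> field_differentiable at z" if "norm z = 1" for z
    using normal_form_field_differentiable[OF mu] that by simp
  note conj = iteration_types_conj[OF a \<kappa> norm_normal_form_less_1[OF mu] this G]
  show ?thesis
    using conj normal_form_classification[OF mu] by (intro iteration_type_by_sign) blast+
qed

section \<open>The set \<open>E\<^sub>2\<close>\<close>

text \<open>\<open>(\<phi>\<^sub>\<mu>)\<^sup>2 = \<phi>\<^sub>-\<^sub>\<mu> \<circ> normal_form \<mu> \<circ> \<phi>\<^sub>\<mu>\<close>.\<close>
lemma E2_eq: "E2 = {\<mu>. norm \<mu> < 1 \<and> 0 < nf_discr \<mu>}"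
proof -
  have "elliptic (\<lambda>z. (blaschke_factor \<mu> z)^2) \<longleftrightarrow> 0 < nf_discr \<mu>" if mu: "norm \<mu> < 1" for \<mu>
  proof -
    define g where "g y = 1 - cnj \<mu> * (blaschke_factor \<mu> y)^2" for y
    have "\<forall>\<^sub>F y in nhds z. (blaschke_factor \<mu> y)^2
            = blaschke_factor (-\<mu>) (cnj 1 * normal_form \<mu> (1 * blaschke_factor \<mu> y))"
      if z: "norm z \<le> 1" for z
    proof -
      have "isCont g z"
        unfolding g_def using isCont_blaschke_factor[OF blaschke_denom_nonzero[OF mu z]]
        by (intro continuous_intros)
      moreover have "g z \<noteq> 0"
        using norm_blaschke_factor_le_1[OF mu z] unfolding g_def
        by (intro blaschke_denom_nonzero[OF mu]) (simp add: norm_power power_le_one)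
      ultimately have "\<forall>\<^sub>F y in nhds z. g y \<noteq> 0" by (rule isCont_eventually_nonzero)
      then show ?thesis
        by (rule eventually_mono) (simp add: g_def normal_form_def blaschke_factor_inverse[OF mu])
    qed
    from conj_normal_form_classification[OF mu _ mu this] show ?thesis by simp
  qed
  then show ?thesis unfolding E2_def by auto
qed

lemma continuous_nf_discr: "continuous_on UNIV nf_discr"
  unfolding nf_discr_def by (intro continuous_intros)

lemma open_E2: "open E2"
proof -
  have "open {\<mu>. 0 < nf_discr \<mu>}"
    using continuous_nf_discr by (intro open_Collect_less) (auto intro: continuous_intros)
  then have "open (ball 0 1 \<inter> {\<mu>. 0 < nf_discr \<mu>})" by (intro open_Int) auto
  moreover have "E2 = ball 0 1 \<inter> {\<mu>. 0 < nf_discr \<mu>}" unfolding E2_eq by auto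
  ultimately show ?thesis by simp
qed

lemma closure_E2_subset: "closure E2 \<subseteq> {\<mu>. 0 \<le> nf_discr \<mu>}"
proof (rule closure_minimal)
  show "E2 \<subseteq> {\<mu>. 0 \<le> nf_discr \<mu>}" unfolding E2_eq by auto
  show "closed {\<mu>. 0 \<le> nf_discr \<mu>}"
    using closed_Collect_le[of "\<lambda>_. 0" nf_discr] continuous_nf_discr by (auto intro: continuous_intros)
qed

lemma in_closure_circle_Re_greater:
  fixes \<mu> :: complex
  assumes "Re \<mu> < norm \<mu>"
  shows "\<mu> \<in> closure {w. norm w = norm \<mu> \<and> Re \<mu> < Re w}"
proof -
  define r where "r = norm \<mu>"
  define x where "x = Re \<mu>"
  have xr: "x < r" "-r \<le> x" "0 \<le> r" using assms abs_Re_le_cmod[of \<mu>] unfolding r_def x_def by auto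
  define \<sigma> :: real where "\<sigma> = (if Im \<mu> \<ge> 0 then 1 else -1)"
  define \<delta> where "\<delta> n = (r - x) / (2 + real n)" for n :: nat
  define M where "M n = Complex (x + \<delta> n) (\<sigma> * sqrt (r^2 - (x + \<delta> n)^2))" for n
  have \<delta>: "0 < \<delta> n" "\<delta> n \<le> r - x" for n
    unfolding \<delta>_def using xr by (auto simp: divide_le_eq)
  have "\<bar>x + \<delta> n\<bar> \<le> r" for n using \<delta>[of n] xr by auto
  then have "(x + \<delta> n)^2 \<le> r^2" for n using abs_le_square_iff[of "x + \<delta> n" r] xr by simp
  then have "norm (M n) = r" for n
    unfolding M_def using xr by (simp add: cmod_def power_mult_distrib \<sigma>_def)
  then have M_in: "M n \<in> {w. norm w = norm \<mu> \<and> Re \<mu> < Re w}" for n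
    using \<delta>(1)[of n] unfolding M_def r_def x_def by simp
  have "\<delta> \<longlonglongrightarrow> 0"
    unfolding \<delta>_def
    by (intro tendsto_divide_0[OF tendsto_const] filterlim_at_top_imp_at_infinity
        filterlim_tendsto_add_at_top[OF tendsto_const filterlim_real_sequentially])
  then have "M \<longlonglongrightarrow> Complex (x + 0) (\<sigma> * sqrt (r^2 - (x + 0)^2))"
    unfolding M_def by (intro tendsto_intros)
  moreover have "Complex (x + 0) (\<sigma> * sqrt (r^2 - (x + 0)^2)) = \<mu>"
  proof -
    have "r^2 - x^2 = (Im \<mu>)^2" unfolding r_def x_def by (simp add: cmod_power2)
    then show ?thesis unfolding x_def \<sigma>_def by (simp add: complex_eq_iff)
  qed
  ultimately show ?thesis unfolding closure_sequential using M_in by blast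
qed

text \<open>At fixed modulus \<open>nf_discr\<close> increases with the real part, and \<open>nf_discr \<mu> > 0\<close> when \<open>\<mu>\<close> is
  real and positive.\<close>
lemma nf_discr_zero_in_closure_E2:
  assumes mu: "norm \<mu> < 1" and discr: "nf_discr \<mu> = 0"
  shows "\<mu> \<in> closure E2"
proof -
  define r where "r = norm \<mu>"
  have "Re \<mu> \<noteq> r"
  proof
    assume "Re \<mu> = r"
    have "(1 - r) * (1 + 3*r)^3 = 1 + 8*r + 18*r^2 - 27*r^4"
      by (simp add: power2_eq_square power3_eq_cube power4_eq_xxxx algebra_simps)
    moreover have "1 - r > 0" "1 + 3*r > 0" using mu norm_ge_zero[of \<mu>] unfolding r_def by linarith+
    then have "(1 - r) * (1 + 3*r)^3 > 0" by simp
    ultimately have "nf_discr \<mu> > 0" unfolding nf_discr_def \<open>Re \<mu> = r\<close> r_def by simp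
    with discr show False by simp
  qed
  then have "Re \<mu> < norm \<mu>" using abs_Re_le_cmod[of \<mu>] unfolding r_def by linarith
  moreover have "{w. norm w = norm \<mu> \<and> Re \<mu> < Re w} \<subseteq> E2"
    using mu discr unfolding E2_eq nf_discr_def by auto
  ultimately show ?thesis using in_closure_circle_Re_greater closure_mono by blast
qed

lemma E2_membership:
  assumes mu: "norm \<mu> < 1"
  shows "(\<mu> \<in> E2 \<longleftrightarrow> 0 < nf_discr \<mu>) \<and> (\<mu> \<in> frontier E2 \<inter> ball 0 1 \<longleftrightarrow> nf_discr \<mu> = 0)
       \<and> (\<mu> \<in> ball 0 1 - closure E2 \<longleftrightarrow> nf_discr \<mu> < 0)"
proof -
  have E2: "\<mu> \<in> E2 \<longleftrightarrow> 0 < nf_discr \<mu>" unfolding E2_eq using mu by simp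
  have "\<mu> \<in> closure E2 \<longleftrightarrow> 0 \<le> nf_discr \<mu>"
  proof
    assume "\<mu> \<in> closure E2"
    then show "0 \<le> nf_discr \<mu>" using closure_E2_subset by auto
  next
    assume "0 \<le> nf_discr \<mu>"
    then consider "0 < nf_discr \<mu>" | "nf_discr \<mu> = 0" by linarith
    then show "\<mu> \<in> closure E2"
      using E2 closure_subset nf_discr_zero_in_closure_E2[OF mu] by cases auto
  qed
  note cl = this
  have "frontier E2 = closure E2 - E2" by (simp add: frontier_def interior_open[OF open_E2])
  then have "\<mu> \<in> frontier E2 \<longleftrightarrow> \<mu> \<in> closure E2 \<and> \<mu> \<notin> E2" by simp
  then show ?thesis using E2 cl mu by force
qed

section \<open>Degree-two Blaschke products at the critical point\<close>

text \<open>Writing \<open>B = P / Q\<close>, the critical point \<open>c\<close> is a double root of \<open>P - B(c) Q\<close>.\<close>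
lemma blaschke_product_critical_eq:
  fixes w u c :: complex
  assumes "norm w < 1" "norm u < 1" "norm c < 1"
    and "deriv (\<lambda>z. blaschke_factor w z * blaschke_factor u z) c = 0"
  shows "(2*c - w - u) * ((1 - cnj w * c) * (1 - cnj u * c))
           - (c - w) * (c - u) * (2 * cnj w * cnj u * c - cnj w - cnj u) = 0"
proof -
  define P where "P z = (z - w) * (z - u)" for z
  define Q where "Q z = (1 - cnj w * z) * (1 - cnj u * z)" for z
  have B_eq: "(\<lambda>z. blaschke_factor w z * blaschke_factor u z) = (\<lambda>z. P z / Q z)"
    unfolding P_def Q_def blaschke_factor_def by (simp add: fun_eq_iff)
  have Qc: "Q c \<noteq> 0" unfolding Q_def using blaschke_denom_nonzero assms by (simp add: less_imp_le)
  have "(P has_field_derivative (2*c - w - u)) (at c)" unfolding P_def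
    by (auto intro!: derivative_eq_intros simp: algebra_simps)
  moreover have "(Q has_field_derivative (2 * cnj w * cnj u * c - cnj w - cnj u)) (at c)" unfolding Q_def
    by (auto intro!: derivative_eq_intros simp: algebra_simps)
  ultimately have "((\<lambda>z. P z / Q z) has_field_derivative
      ((2*c - w - u) * Q c - P c * (2 * cnj w * cnj u * c - cnj w - cnj u)) / (Q c * Q c)) (at c)"
    using Qc by (rule DERIV_divide)
  then have "((2*c - w - u) * Q c - P c * (2 * cnj w * cnj u * c - cnj w - cnj u)) / (Q c * Q c) = 0"
    using assms(4) unfolding B_eq by (simp add: DERIV_imp_deriv)
  then show ?thesis using Qc unfolding P_def Q_def by simp
qed

lemma double_root_relations:
  fixes w u c W U a :: complex
  assumes at_c: "a * ((1 - W*c)*(1 - U*c)) = (c - w)*(c - u)"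
    and crit: "(2*c - w - u) * ((1 - W * c) * (1 - U * c)) - (c - w) * (c - u) * (2 * W * U * c - W - U) = 0"
    and Qc: "(1 - W*c)*(1 - U*c) \<noteq> 0"
  shows "w*u - a = (1 - a*W*U) * c^2" "-(w+u) + a*(W+U) = -2*(1 - a*W*U)*c"
proof -
  have "((1 - W*c)*(1 - U*c)) * ((2*c - w - u) - a * (2 * W * U * c - W - U)) = 0"
    using at_c crit by algebra
  then have d: "(2*c - w - u) - a * (2 * W * U * c - W - U) = 0" using Qc by simp
  then show "-(w+u) + a*(W+U) = -2*(1 - a*W*U)*c" by algebra
  show "w*u - a = (1 - a*W*U) * c^2" using d at_c by algebra
qed

text \<open>The critical equation, a quadratic in \<open>c\<close>, and its conjugate share the root \<open>c\<close>, and
  subtracting them shows that \<open>Q(c) - cnj w cnj u P(c)\<close> is real.\<close>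
lemma critical_value_real:
  fixes w u c W U C :: complex
  assumes crit: "(2*c - w - u) * ((1 - W * c) * (1 - U * c)) - (c - w) * (c - u) * (2 * W * U * c - W - U) = 0"
    and crit': "(2*C - W - U) * ((1 - w * C) * (1 - u * C)) - (C - W) * (C - U) * (2 * w * u * C - w - u) = 0"
    and cC: "c * C \<noteq> 1"
  shows "(1 - W*c)*(1 - U*c) - W*U*((c - w)*(c - u)) = (1 - w*C)*(1 - u*C) - w*u*((C - W)*(C - U))"
proof -
  define g where "g = W*U*(w+u) - (W+U)"
  define g' where "g' = w*u*(W+U) - (w+u)"
  have "g*c^2 + 2*(1 - w*u*W*U)*c + g' = 0" using crit unfolding g_def g'_def by algebra
  moreover have "g'*C^2 + 2*(1 - w*u*W*U)*C + g = 0" using crit' unfolding g_def g'_def by algebra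
  ultimately have "(g*c - g'*C) * (c*C - 1) = 0" by algebra
  then have "g*c = g'*C" using cC by simp
  then show ?thesis unfolding g_def g'_def by algebra
qed

lemma blaschke_product_at_critical_point:
  fixes w u c y :: complex
  defines "B \<equiv> \<lambda>z. blaschke_factor w z * blaschke_factor u z"
  assumes w: "norm w < 1" and u: "norm u < 1" and c: "norm c < 1" and crit: "deriv B c = 0"
    and denom: "(1 - cnj w * y) * (1 - cnj u * y) \<noteq> 0" "1 - cnj c * y \<noteq> 0"
  shows "blaschke_factor (B c) (B y)
         = (1 - cnj c * w) * (1 - cnj c * u) / cnj ((1 - cnj c * w) * (1 - cnj c * u))
           * (blaschke_factor c y)^2"
proof -
  define a where "a = B c"
  define P where "P z = (z - w) * (z - u)" for z
  define Q where "Q z = (1 - cnj w * z) * (1 - cnj u * z)" for z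
  define x where "x = (1 - cnj c * w) * (1 - cnj c * u)"
  define L where "L = 1 - a * cnj w * cnj u"
  have B_eq: "B z = P z / Q z" for z unfolding B_def P_def Q_def blaschke_factor_def by simp
  have Qc: "Q c \<noteq> 0" using blaschke_denom_nonzero w u c by (simp add: Q_def less_imp_le)
  have at_c: "a * Q c = P c" using B_eq[of c] Qc by (simp add: a_def field_simps)
  have crit_eq: "(2*c - w - u) * ((1 - cnj w * c) * (1 - cnj u * c))
           - (c - w) * (c - u) * (2 * cnj w * cnj u * c - cnj w - cnj u) = 0"
    using blaschke_product_critical_eq[OF w u c] crit unfolding B_def by simp
  note rels = double_root_relations[OF at_c[unfolded P_def Q_def] crit_eq Qc[unfolded Q_def]]
  have num: "P y - a * Q y = L * (y - c)^2"
    using rels unfolding P_def Q_def L_def by algebra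
  have "cnj w * cnj u - cnj a = (1 - cnj a * w * u) * (cnj c)^2"
    "-(cnj w + cnj u) + cnj a * (w + u) = -2*(1 - cnj a * w * u) * cnj c"
    using arg_cong[where f=cnj, OF rels(1)] arg_cong[where f=cnj, OF rels(2)] by simp_all
  then have den: "Q y - cnj a * P y = cnj L * (1 - cnj c * y)^2"
    unfolding P_def Q_def L_def by simp algebra
  have cnj_x: "cnj x = (1 - c * cnj w) * (1 - c * cnj u)" by (simp add: x_def)
  have "L * cnj x = Q c - cnj w * cnj u * P c"
    unfolding cnj_x L_def at_c[symmetric] Q_def by (simp add: algebra_simps)
  moreover have "cnj (Q c - cnj w * cnj u * P c) = Q c - cnj w * cnj u * P c"
  proof -
    have "c * cnj c \<noteq> 1" using blaschke_denom_nonzero[OF c, of c] c by (simp add: mult.commute)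
    from critical_value_real[OF crit_eq _ this] arg_cong[where f=cnj, OF crit_eq]
    show ?thesis unfolding P_def Q_def by simp
  qed
  ultimately have real: "cnj L * x = L * cnj x" by (metis complex_cnj_cnj complex_cnj_mult)
  have "norm a \<le> norm (blaschke_factor w c)"
    using mult_left_le[of "norm (blaschke_factor u c)" "norm (blaschke_factor w c)"]
      norm_blaschke_factor_less_1[OF u c] by (simp add: a_def B_def norm_mult)
  moreover have "norm a * (norm w * norm u) \<le> norm a"
    using mult_left_le[of "norm w * norm u" "norm a"] mult_le_one[of "norm w" "norm u"] w u by simp
  ultimately have "norm (a * cnj w * cnj u) < 1"
    using norm_blaschke_factor_less_1[OF w c] by (simp add: norm_mult mult.assoc)
  then have "L \<noteq> 0" unfolding L_def by auto
  then have L: "cnj L \<noteq> 0" by simp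
  have Qy: "Q y \<noteq> 0" using denom(1) unfolding Q_def .
  have x_nonzero: "x \<noteq> 0"
    using blaschke_denom_nonzero[OF c] w u unfolding x_def by (simp add: less_imp_le)
  have "Q y - cnj a * P y \<noteq> 0" unfolding den using L denom(2) by simp
  then have "blaschke_factor a (B y) = (P y - a * Q y) / (Q y - cnj a * P y)"
    using Qy unfolding B_eq blaschke_factor_def by (simp add: field_simps)
  also have "\<dots> = L / cnj L * (blaschke_factor c y)^2"
    unfolding num den blaschke_factor_def using L denom(2) by (simp add: field_simps power2_eq_square)
  also have "L / cnj L = x / cnj x"
    using real L x_nonzero by (simp add: field_simps)
  finally show ?thesis unfolding a_def x_def .
qed

lemma norm_divide_cnj: "x \<noteq> 0 \<Longrightarrow> norm (x / cnj x) = 1"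
  by (simp add: norm_divide)

lemma conj_square_params:
  fixes a c \<omega> :: complex
  defines "\<kappa> \<equiv> \<omega> * (1 - c * cnj a) / (1 - cnj c * a)"
  defines "lam \<equiv> - \<kappa> * blaschke_factor c a"
  assumes a: "norm a < 1" and c: "norm c < 1" and \<omega>: "norm \<omega> = 1"
  shows "norm \<kappa> = 1" "norm lam < 1"
proof -
  define x where "x = 1 - cnj c * a"
  have "x \<noteq> 0" using blaschke_denom_nonzero[OF c, of a] a unfolding x_def by simp
  then have "norm (cnj x / x) = 1" using norm_divide_cnj[of "cnj x"] by simp
  moreover have "\<kappa> = \<omega> * (cnj x / x)" unfolding \<kappa>_def x_def by simp
  then have "norm \<kappa> = norm \<omega> * norm (cnj x / x)" by (simp only: norm_mult)
  ultimately show \<kappa>: "norm \<kappa> = 1" using \<omega> by simp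
  then show "norm lam < 1"
    using norm_blaschke_factor_less_1[OF c a] unfolding lam_def by (simp add: norm_mult)
qed

lemma blaschke_factor_conj_square:
  fixes a c \<omega> X Y :: complex
  defines "\<kappa> \<equiv> \<omega> * (1 - c * cnj a) / (1 - cnj c * a)"
  defines "lam \<equiv> - \<kappa> * blaschke_factor c a"
  assumes a: "norm a < 1" and c: "norm c < 1" and \<omega>: "norm \<omega> = 1"
    and X: "blaschke_factor a X = \<omega> * Y" "1 - cnj a * X \<noteq> 0" "1 - cnj c * X \<noteq> 0"
    and denom: "1 - cnj lam * (\<kappa>^2 * Y) \<noteq> 0"
  shows "\<kappa> * blaschke_factor c X = blaschke_factor lam (\<kappa>^2 * Y)"
proof -
  define x where "x = 1 - cnj c * a"
  have "x \<noteq> 0" using blaschke_denom_nonzero[OF c, of a] a unfolding x_def by simp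
  then have x: "x \<noteq> 0" "cnj x \<noteq> 0" by simp_all
  have "norm \<kappa> = 1" using conj_square_params(1)[OF a c \<omega>] unfolding \<kappa>_def .
  then have unimodular: "\<kappa> * cnj \<kappa> = 1" using complex_norm_square[of \<kappa>] by simp
  have "X - a = \<omega> * Y * (1 - cnj a * X)" using X unfolding blaschke_factor_def by (simp add: field_simps)
  moreover have "\<kappa> * x = \<omega> * cnj x" using x unfolding \<kappa>_def x_def by simp
  moreover have "lam * x = - \<kappa> * (a - c)" using x unfolding lam_def x_def blaschke_factor_def by simp
  moreover have "cnj lam * cnj x = - cnj \<kappa> * (cnj a - cnj c)"
    using x unfolding lam_def x_def blaschke_factor_def by simp
  ultimately have "\<kappa> * (X - c) * (1 - cnj lam * (\<kappa>^2 * Y)) = (\<kappa>^2 * Y - lam) * (1 - cnj c * X)"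
    using unimodular x unfolding x_def by (simp add: complex_cnj_diff) algebra
  then show ?thesis using X(3) denom unfolding blaschke_factor_def by (simp add: field_simps)
qed

lemma norm_blaschke_product_le_1:
  "norm w < 1 \<Longrightarrow> norm u < 1 \<Longrightarrow> norm z \<le> 1 \<Longrightarrow> norm (blaschke_factor w z * blaschke_factor u z) \<le> 1"
  using norm_blaschke_factor_le_1 by (simp add: norm_mult mult_le_one)

lemma norm_blaschke_product_less_1:
  "norm w < 1 \<Longrightarrow> norm u < 1 \<Longrightarrow> norm z < 1 \<Longrightarrow> norm (blaschke_factor w z * blaschke_factor u z) < 1"
  using norm_blaschke_factor_less_1[of w z] norm_blaschke_factor_le_1[of u z]
    mult_left_le[of "norm (blaschke_factor u z)" "norm (blaschke_factor w z)"]
  by (simp add: norm_mult)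

lemma blaschke_product_conj_normal_form_at:
  fixes w u c y :: complex and B :: "complex \<Rightarrow> complex"
  defines "\<omega> \<equiv> (1 - cnj c * w) * (1 - cnj c * u) / cnj ((1 - cnj c * w) * (1 - cnj c * u))"
  defines "\<kappa> \<equiv> \<omega> * (1 - c * cnj (B c)) / (1 - cnj c * B c)"
  defines "lam \<equiv> - \<kappa> * blaschke_factor c (B c)"
  assumes B: "B = (\<lambda>z. blaschke_factor w z * blaschke_factor u z)"
    and w: "norm w < 1" and u: "norm u < 1" and c: "norm c < 1" and crit: "deriv B c = 0"
    and denom: "(1 - cnj w * y) * (1 - cnj u * y) \<noteq> 0" "1 - cnj c * y \<noteq> 0"
      "1 - cnj (B c) * B y \<noteq> 0" "1 - cnj c * B y \<noteq> 0"
      "1 - cnj lam * (\<kappa> * blaschke_factor c y)^2 \<noteq> 0"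
  shows "B y = blaschke_factor (-c) (cnj \<kappa> * normal_form lam (\<kappa> * blaschke_factor c y))"
proof -
  have a: "norm (B c) < 1" using norm_blaschke_product_less_1[OF w u c] by (simp add: B)
  have "(1 - cnj c * w) * (1 - cnj c * u) \<noteq> 0"
    using blaschke_denom_nonzero[OF c] w u by (simp add: less_imp_le)
  then have \<omega>: "norm \<omega> = 1" unfolding \<omega>_def by (rule norm_divide_cnj)
  have "norm \<kappa> = 1" using conj_square_params(1)[OF a c \<omega>] unfolding \<kappa>_def .
  then have unimodular: "cnj \<kappa> * \<kappa> = 1" using complex_norm_square[of \<kappa>] by (simp add: mult.commute)
  have "blaschke_factor (B c) (B y) = \<omega> * (blaschke_factor c y)^2"
    using blaschke_product_at_critical_point[OF w u c crit[unfolded B] denom(1,2)]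
    unfolding B \<omega>_def .
  moreover have "1 - cnj lam * (\<kappa>^2 * (blaschke_factor c y)^2) \<noteq> 0"
    using denom(5) by (simp add: power_mult_distrib)
  ultimately have "\<kappa> * blaschke_factor c (B y) = blaschke_factor lam (\<kappa>^2 * (blaschke_factor c y)^2)"
    using blaschke_factor_conj_square[OF a c \<omega> _ denom(3,4)] unfolding \<kappa>_def lam_def by blast
  then have "\<kappa> * blaschke_factor c (B y) = normal_form lam (\<kappa> * blaschke_factor c y)"
    by (simp add: normal_form_def power_mult_distrib)
  then have "cnj \<kappa> * normal_form lam (\<kappa> * blaschke_factor c y) = blaschke_factor c (B y)"
    using unimodular by (metis mult.assoc mult_1)
  then show ?thesis using blaschke_factor_inverse[OF c denom(4)] by simp
qed

lemma blaschke_product_conj_normal_form: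
  fixes w u c :: complex and B :: "complex \<Rightarrow> complex"
  defines "\<omega> \<equiv> (1 - cnj c * w) * (1 - cnj c * u) / cnj ((1 - cnj c * w) * (1 - cnj c * u))"
  defines "\<kappa> \<equiv> \<omega> * (1 - c * cnj (B c)) / (1 - cnj c * B c)"
  defines "lam \<equiv> - \<kappa> * blaschke_factor c (B c)"
  assumes B: "B = (\<lambda>z. blaschke_factor w z * blaschke_factor u z)"
    and w: "norm w < 1" and u: "norm u < 1" and c: "norm c < 1" and crit: "deriv B c = 0"
  shows "norm \<kappa> = 1" "norm lam < 1"
    and "\<And>z. norm z \<le> 1 \<Longrightarrow>
      \<forall>\<^sub>F y in nhds z. B y = blaschke_factor (-c) (cnj \<kappa> * normal_form lam (\<kappa> * blaschke_factor c y))"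
proof -
  have a: "norm (B c) < 1" using norm_blaschke_product_less_1[OF w u c] by (simp add: B)
  have B_le: "norm (B y) \<le> 1" if "norm y \<le> 1" for y
    using norm_blaschke_product_le_1[OF w u that] by (simp add: B)
  have "(1 - cnj c * w) * (1 - cnj c * u) \<noteq> 0"
    using blaschke_denom_nonzero[OF c] w u by (simp add: less_imp_le)
  then have "norm \<omega> = 1" unfolding \<omega>_def by (rule norm_divide_cnj)
  from conj_square_params[OF a c this]
  show \<kappa>: "norm \<kappa> = 1" and lam: "norm lam < 1" unfolding \<kappa>_def lam_def by simp_all
  fix z :: complex
  assume z: "norm z \<le> 1"
  define g where "g y = (1 - cnj w * y) * (1 - cnj u * y) * (1 - cnj c * y) * (1 - cnj (B c) * B y)
      * (1 - cnj c * B y) * (1 - cnj lam * (\<kappa> * blaschke_factor c y)^2)" for y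
  have "isCont g z"
  proof -
    have "isCont (blaschke_factor w) z" "isCont (blaschke_factor u) z" "isCont (blaschke_factor c) z"
      using isCont_blaschke_factor blaschke_denom_nonzero w u c z by auto
    then show ?thesis unfolding g_def B by (intro continuous_intros) auto
  qed
  moreover have "g z \<noteq> 0"
  proof -
    have "norm ((\<kappa> * blaschke_factor c z)^2) \<le> 1"
      using norm_blaschke_factor_le_1[OF c z] \<kappa> by (simp add: norm_mult norm_power power_le_one)
    then show ?thesis
      unfolding g_def using blaschke_denom_nonzero[OF w z] blaschke_denom_nonzero[OF u z]
        blaschke_denom_nonzero[OF c z] blaschke_denom_nonzero[OF a B_le[OF z]]
        blaschke_denom_nonzero[OF c B_le[OF z]] blaschke_denom_nonzero[OF lam] by simp
  qed
  ultimately have "\<forall>\<^sub>F y in nhds z. g y \<noteq> 0" by (rule isCont_eventually_nonzero)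
  then show "\<forall>\<^sub>F y in nhds z. B y = blaschke_factor (-c) (cnj \<kappa> * normal_form lam (\<kappa> * blaschke_factor c y))"
    by (rule eventually_mono)
      (use blaschke_product_conj_normal_form_at[OF B w u c crit] in \<open>simp add: g_def \<omega>_def \<kappa>_def lam_def\<close>)
qed

lemma exp_two_i_Arg:
  assumes "x \<noteq> 0"
  shows "exp (\<i> * (2 * complex_of_real (Arg x))) = x / cnj x"
proof -
  have "exp (\<i> * (2 * complex_of_real (Arg x))) = cis (Arg x + Arg x)"
    by (simp add: cis_conv_exp algebra_simps)
  also have "\<dots> = cis (Arg x) * cis (Arg x)" by (simp add: cis_mult)
  also have "\<dots> = (x / of_real (norm x)) * (x / of_real (norm x))"
    using cis_Arg[OF assms] by (simp add: sgn_div_norm scaleR_conv_of_real divide_inverse mult.commute)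
  also have "\<dots> = x * x / (x * cnj x)"
    using complex_norm_square[of x] by (simp add: power2_eq_square)
  also have "\<dots> = x / cnj x" using assms by simp
  finally show ?thesis .
qed

lemma exp_pi_plus_two_Args:
  assumes "x1 \<noteq> 0" "x2 \<noteq> 0" "x3 \<noteq> 0"
  shows "exp (\<i> * (of_real pi + 2 * of_real (Arg x1) + 2 * of_real (Arg x2) + 2 * of_real (Arg x3)))
       = - (x1 / cnj x1 * (x2 / cnj x2) * (x3 / cnj x3))"
  unfolding distrib_left exp_add exp_two_i_Arg[OF assms(1)] exp_two_i_Arg[OF assms(2)]
    exp_two_i_Arg[OF assms(3)] by simp

theorem theorem3p4:
  fixes u w c :: complex
  defines "B \<equiv> (\<lambda>z. blaschke_factor w z * blaschke_factor u z)"
  assumes "w \<in> ball 0 1" and "u \<in> ball 0 1"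
    and "c \<in> ball 0 1" and "deriv B c = 0"
  defines "lam \<equiv> exp (\<i> * (of_real pi + 2 * of_real (Arg (1 - cnj c * w))
                 + 2 * of_real (Arg (1 - cnj c * u)) + 2 * of_real (Arg (1 - c * cnj (B c)))))
               * ((B c - c) / (1 - cnj c * B c))"
  shows "(elliptic B \<longleftrightarrow> lam \<in> E2)
       \<and> (parabolic B \<longleftrightarrow> lam \<in> frontier E2 \<inter> ball 0 1)
       \<and> (hyperbolic B \<longleftrightarrow> lam \<in> ball 0 1 - closure E2)"
proof -
  have w: "norm w < 1" and u: "norm u < 1" and c: "norm c < 1" using assms by auto
  define x1 where "x1 = 1 - cnj c * w"
  define x2 where "x2 = 1 - cnj c * u"
  define x3 where "x3 = 1 - c * cnj (B c)"
  define \<kappa> where "\<kappa> = x1 * x2 / cnj (x1 * x2) * (1 - c * cnj (B c)) / (1 - cnj c * B c)"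
  note conj = blaschke_product_conj_normal_form[OF B_def[THEN meta_eq_to_obj_eq] w u c \<open>deriv B c = 0\<close>,
      folded x1_def x2_def, folded \<kappa>_def]
  have "norm (B c) \<le> 1" using norm_blaschke_product_le_1[OF w u] c by (simp add: B_def)
  then have "cnj x3 \<noteq> 0" using blaschke_denom_nonzero[OF c] by (simp add: x3_def)
  moreover have "x1 \<noteq> 0" "x2 \<noteq> 0"
    using blaschke_denom_nonzero[OF c] w u unfolding x1_def x2_def by auto
  ultimately have nonzero: "x1 \<noteq> 0" "x2 \<noteq> 0" "x3 \<noteq> 0" by auto
  have "\<kappa> = x1 / cnj x1 * (x2 / cnj x2) * (x3 / cnj x3)"
    using nonzero unfolding \<kappa>_def x3_def by (simp add: field_simps)
  moreover have "lam = - (x1 / cnj x1 * (x2 / cnj x2) * (x3 / cnj x3)) * blaschke_factor c (B c)"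
    unfolding lam_def x1_def[symmetric] x2_def[symmetric] x3_def[symmetric] exp_pi_plus_two_Args[OF nonzero]
    by (simp add: blaschke_factor_def)
  ultimately have "lam = - \<kappa> * blaschke_factor c (B c)" by simp
  then show ?thesis
    using conj_normal_form_classification[OF c conj] E2_membership[OF conj(2)] by simp
qed

end
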